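(* Let $1\le d<n$ and $r=d(n-d)$. Let $\sigma_{\max}:=\sigma_{\mathfrak C_{\mathrm{left}}}\in\mathsf S_r$ and let $[e,\sigma_{\max}]_R=\{\sigma\in\mathsf S_r\mid e\le_R\sigma\le_R\sigma_{\max}\}$. Then the map $C(d,n)\to[e,\sigma_{\max}]_R$, $\mathfrak C\mapsto\sigma_{\mathfrak C}$, is well defined and is a bijection between the set $C(d,n)$ of all maximal chains in $I(d,n)$ and the interval $[e,\sigma_{\max}]_R$. Moreover, for $1\le t\le r-1$ and $\mathfrak C\in C(d,n)$: if $E_t(\mathfrak C)\neq0$ then $\sigma_{E_t(\mathfrak C)}=\sigma_{\mathfrak C}s_t$, and if $F_t(\mathfrak C)\neq 0$ then $\sigma_{F_t(\mathfrak C)}=\sigma_{\mathfrak C}s_t$.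
   Context: $I(d,n)$ is the set of $d$-element subsets of $\{1,\dots,n\}$, written as increasing sequences $\underline i=i_1i_2\cdots i_d$ ($i_1<\dots<i_d$), partially ordered by $\underline i\le\underline j$ iff $i_k\le j_k$ for all $k$; the length is $\ell(\underline i)=\sum_h(i_h-h)$. $\underline i_{\min}=12\cdots d$, $\underline i_{\max}=(n-d+1)\cdots n$. A maximal chain is a totally ordered subset maximal under inclusion; every maximal chain has the form $\mathfrak C:\underline i_r>\underline i_{r-1}>\cdots>\underline i_0$ with $\ell(\underline i_t)=t$. $C(d,n)$ is the set of maximal chains. Rows are compared lexicographically ($\le_{lex}$), and chains are compared by comparing lexicographically the concatenated strings $\underline i_r\underline i_{r-1}\cdots\underline i_0$; $\mathfrak C_{\mathrm{right}}$ is the lexicographically smallest and $\mathfrak C_{\mathrm{left}}$ the lexicographically largest maximal chain. Root operators: for $1\le h\le d$ and $h\le s<n-d+h$, $f_{s,h}$ acts on $I(d,n)\sqcup\{0\}$ by $f_{s,h}(0)=0$ and $f_{s,h}(\underline i)$ = the row obtained by replacing $i_h=s$ by $s+1$ if $i_h=s$ and ($h=d$ or $i_{h+1}\ge s+2$), and $0$ otherwise. For a maximal chain $\underline i_r>\dots>\underline i_0$, each step satisfies $\underline i_t=f_{s_t,h_t}(\underline i_{t-1})$ for a unique pair, and each of the $r$ admissible pairs $(s,h)$ occurs exactly once. Writing $\tilde f_t:=f_{s_t,h_t}$ for the operators along $\mathfrak C_{\mathrm{right}}$, the permutation $\sigma_{\mathfrak C}\in\mathsf S_r$ of a maximal chain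 $\mathfrak C$ is defined by: the operator taking $\underline i_{t-1}$ to $\underline i_t$ in $\mathfrak C$ is $\tilde f_{\sigma_{\mathfrak C}(t)}$. Peaks and chain operators: for a maximal chain $\mathfrak C$ and $1\le t\le r-1$, the Bruhat interval $[\underline i_{t-1},\underline i_{t+1}]$ has 3 or 4 elements; if it has 4 elements $\{\underline i_{t-1},\underline i_t,\underline i'_t,\underline i_{t+1}\}$, $\underline i_t$ is a right peak if $\underline i'_t>_{lex}\underline i_t$ and a left peak if $\underline i_t>_{lex}\underline i'_t$. $F_t(\mathfrak C)$ is the chain obtained by replacing $\underline i_t$ by $\underline i'_t$ if $\underline i_t$ is a right peak, and $0$ otherwise; $E_t(\mathfrak C)$ is defined likewise with left peaks. $s_t=(t,t+1)\in\mathsf S_r$ are the simple transpositions, and $\le_R$ is the right weak Bruhat order: $u\le_R v$ iff some reduced word for $v$ has a reduced word for $u$ as initial substring. *)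

theory Defs
  imports "HOL-Combinatorics.Combinatorics"
begin

type_synonym row = "nat list"

text \<open>A row i_1 i_2 ... i_d is the list [i_1,...,i_d] (entry i_h is at list index h-1).\<close>

definition Irows :: "nat \<Rightarrow> nat \<Rightarrow> row set" where
  "Irows d n = {i. length i = d \<and> sorted_wrt (<) i \<and> set i \<subseteq> {1..n}}"

definition row_le :: "row \<Rightarrow> row \<Rightarrow> bool" where
  "row_le i j \<longleftrightarrow> length i = length j \<and> (\<forall>k<length i. i ! k \<le> j ! k)"

definition row_len :: "row \<Rightarrow> nat" where
  "row_len i = (\<Sum>k<length i. i ! k - (k + 1))"

definition lex_less :: "nat list \<Rightarrow> nat list \<Rightarrow> bool" where
  "lex_less xs ys \<longleftrightarrow> (xs, ys) \<in> lexord {(a, b). a < b}"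

definition is_chain :: "nat \<Rightarrow> nat \<Rightarrow> row set \<Rightarrow> bool" where
  "is_chain d n S \<longleftrightarrow> S \<subseteq> Irows d n \<and> (\<forall>x\<in>S. \<forall>y\<in>S. row_le x y \<or> row_le y x)"

definition is_max_chain :: "nat \<Rightarrow> nat \<Rightarrow> row set \<Rightarrow> bool" where
  "is_max_chain d n S \<longleftrightarrow> is_chain d n S \<and> (\<forall>T. is_chain d n T \<and> S \<subseteq> T \<longrightarrow> T = S)"

definition Cset :: "nat \<Rightarrow> nat \<Rightarrow> row set set" where
  "Cset d n = {S. is_max_chain d n S}"

text \<open>The element of length t of a maximal chain (i.e. the row i_t).\<close>
definition chain_elem :: "row set \<Rightarrow> nat \<Rightarrow> row" where
  "chain_elem S t = (THE x. x \<in> S \<and> row_len x = t)"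

definition chain_word :: "nat \<Rightarrow> nat \<Rightarrow> row set \<Rightarrow> nat list" where
  "chain_word d n S = concat (map (chain_elem S) (rev [0..<d * (n - d) + 1]))"

definition C_right :: "nat \<Rightarrow> nat \<Rightarrow> row set" where
  "C_right d n = (THE C. C \<in> Cset d n \<and>
      (\<forall>C'\<in>Cset d n. C' \<noteq> C \<longrightarrow> lex_less (chain_word d n C) (chain_word d n C')))"

definition C_left :: "nat \<Rightarrow> nat \<Rightarrow> row set" where
  "C_left d n = (THE C. C \<in> Cset d n \<and>
      (\<forall>C'\<in>Cset d n. C' \<noteq> C \<longrightarrow> lex_less (chain_word d n C') (chain_word d n C)))"

definition admissible :: "nat \<Rightarrow> nat \<Rightarrow> nat \<times> nat \<Rightarrow> bool" where
  "admissible d n p \<longleftrightarrow> (case p of (s, h) \<Rightarrow> 1 \<le> h \<and> h \<le> d \<and> h \<le> s \<and> s < n - d + h)"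

text \<open>f_{s,h}; None plays the role of 0.\<close>
definition root_op :: "nat \<Rightarrow> nat \<Rightarrow> row \<Rightarrow> row option" where
  "root_op s h i =
     (if 1 \<le> h \<and> h \<le> length i \<and> i ! (h - 1) = s \<and> (h = length i \<or> s + 2 \<le> i ! h)
      then Some (i[h - 1 := s + 1]) else None)"

definition step_pair :: "nat \<Rightarrow> nat \<Rightarrow> row set \<Rightarrow> nat \<Rightarrow> nat \<times> nat" where
  "step_pair d n S t = (THE p. admissible d n p \<and>
      root_op (fst p) (snd p) (chain_elem S (t - 1)) = Some (chain_elem S t))"

definition sigma :: "nat \<Rightarrow> nat \<Rightarrow> row set \<Rightarrow> nat \<Rightarrow> nat" where
  "sigma d n S t = (if t \<in> {1..d * (n - d)}
      then (THE u. u \<in> {1..d * (n - d)} \<and> step_pair d n (C_right d n) u = step_pair d n S t)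
      else t)"

definition bruhat_interval :: "nat \<Rightarrow> nat \<Rightarrow> row \<Rightarrow> row \<Rightarrow> row set" where
  "bruhat_interval d n a b = {x \<in> Irows d n. row_le a x \<and> row_le x b}"

definition other_mid :: "nat \<Rightarrow> nat \<Rightarrow> row set \<Rightarrow> nat \<Rightarrow> row" where
  "other_mid d n S t = (THE x. x \<in> bruhat_interval d n (chain_elem S (t - 1)) (chain_elem S (t + 1))
       - {chain_elem S (t - 1), chain_elem S t, chain_elem S (t + 1)})"

definition four_elem :: "nat \<Rightarrow> nat \<Rightarrow> row set \<Rightarrow> nat \<Rightarrow> bool" where
  "four_elem d n S t \<longleftrightarrow> card (bruhat_interval d n (chain_elem S (t - 1)) (chain_elem S (t + 1))) = 4"

definition right_peak :: "nat \<Rightarrow> nat \<Rightarrow> row set \<Rightarrow> nat \<Rightarrow> bool" where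
  "right_peak d n S t \<longleftrightarrow> four_elem d n S t \<and> lex_less (chain_elem S t) (other_mid d n S t)"

definition left_peak :: "nat \<Rightarrow> nat \<Rightarrow> row set \<Rightarrow> nat \<Rightarrow> bool" where
  "left_peak d n S t \<longleftrightarrow> four_elem d n S t \<and> lex_less (other_mid d n S t) (chain_elem S t)"

text \<open>F_t and E_t; None plays the role of 0.\<close>
definition F_op :: "nat \<Rightarrow> nat \<Rightarrow> nat \<Rightarrow> row set \<Rightarrow> row set option" where
  "F_op d n t S = (if right_peak d n S t
      then Some (insert (other_mid d n S t) (S - {chain_elem S t})) else None)"

definition E_op :: "nat \<Rightarrow> nat \<Rightarrow> nat \<Rightarrow> row set \<Rightarrow> row set option" where
  "E_op d n t S = (if left_peak d n S t
      then Some (insert (other_mid d n S t) (S - {chain_elem S t})) else None)"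

definition word_prod :: "nat list \<Rightarrow> nat \<Rightarrow> nat" where
  "word_prod w = foldr (\<lambda>a f. Transposition.transpose a (Suc a) \<circ> f) w id"

definition is_word :: "nat \<Rightarrow> nat list \<Rightarrow> bool" where
  "is_word r w \<longleftrightarrow> set w \<subseteq> {1..<r}"

definition reduced :: "nat \<Rightarrow> nat list \<Rightarrow> bool" where
  "reduced r w \<longleftrightarrow> is_word r w \<and>
     (\<forall>w'. is_word r w' \<and> word_prod w' = word_prod w \<longrightarrow> length w \<le> length w')"

definition weak_le :: "nat \<Rightarrow> (nat \<Rightarrow> nat) \<Rightarrow> (nat \<Rightarrow> nat) \<Rightarrow> bool" where
  "weak_le r u v \<longleftrightarrow> (\<exists>w k. reduced r w \<and> word_prod w = v \<and> k \<le> length w \<and>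
       reduced r (take k w) \<and> word_prod (take k w) = u)"

end

theory Submission
  imports Defs
begin

text \<open>A maximal chain climbs from \<open>12\<cdots>d\<close> to \<open>(n-d+1)\<cdots>n\<close> by applying every admissible root
  operator \<open>f\<^sub>s\<^sub>,\<^sub>h\<close> exactly once, and \<open>f\<^sub>s\<^sub>,\<^sub>h\<close> can only act after \<open>f\<^bsub>s-1,h\<^esub>\<close> and
  \<open>f\<^bsub>s+1,h+1\<^esub>\<close>. So maximal chains are the linear extensions of the product order on the
  \<open>d \<times> (n - d)\<close> rectangle of admissible pairs, and \<open>\<sigma>\<^sub>C\<close> sends each step of \<open>C\<close> to the
  position in \<open>C\<^sub>r\<^sub>i\<^sub>g\<^sub>h\<^sub>t\<close> of the operator used there. The lexicographically extremal chains
  read the rectangle row by row (\<open>C\<^sub>r\<^sub>i\<^sub>g\<^sub>h\<^sub>t\<close>) and column by column (\<open>C\<^sub>l\<^sub>e\<^sub>f\<^sub>t\<close>). Since the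
  order of the rectangle is the intersection of these two readings, a permutation comes from a
  chain iff its inversions are among those of \<open>\<sigma>\<^sub>m\<^sub>a\<^sub>x\<close>, which for the right weak order
  means that it lies below \<open>\<sigma>\<^sub>m\<^sub>a\<^sub>x\<close>. At a peak, replacing \<open>i\<^sub>t\<close> by \<open>i'\<^sub>t\<close> exchanges the
  operators used in steps \<open>t\<close> and \<open>t + 1\<close>, which multiplies \<open>\<sigma>\<^sub>C\<close> by \<open>s\<^sub>t\<close> on the right.\<close>

lemma Irows_iff_nth:
  "x \<in> Irows d n \<longleftrightarrow>
     length x = d \<and> (\<forall>i. Suc i < d \<longrightarrow> x!i < x!Suc i) \<and> (\<forall>i<d. 1 \<le> x!i \<and> x!i \<le> n)"
proof -
  have "sorted_wrt (<) x \<longleftrightarrow> (\<forall>i. Suc i < length x \<longrightarrow> x!i < x!Suc i)"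
    by (rule sorted_wrt_iff_nth_Suc_transp) (simp add: transp_def)
  moreover have "set x \<subseteq> {1..n} \<longleftrightarrow> (\<forall>i<length x. 1 \<le> x!i \<and> x!i \<le> n)"
    by (auto simp: set_conv_nth)
  ultimately show ?thesis unfolding Irows_def by auto
qed

lemma Irows_length: "x \<in> Irows d n \<Longrightarrow> length x = d"
  by (simp add: Irows_def)

lemma Irows_nth_gap:
  assumes "x \<in> Irows d n" "i \<le> j" "j < d"
  shows "x!i + (j - i) \<le> x!j"
  using assms(2,3)
proof (induction j)
  case (Suc j)
  show ?case
  proof (cases "i = Suc j")
    case False
    then have "x!i + (j - i) \<le> x!j" using Suc by simp
    moreover have "x!j < x!Suc j" using assms(1) Suc(3) by (simp add: Irows_iff_nth)
    ultimately show ?thesis using False Suc(2) by simp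
  qed simp
qed simp

lemma Irows_nth_bounds:
  assumes "x \<in> Irows d n" "k < d"
  shows "Suc k \<le> x!k" "x!k + d \<le> n + Suc k"
proof -
  have "x!0 + k \<le> x!k" "1 \<le> x!0"
    using Irows_nth_gap[OF assms(1), of 0 k] assms by (auto simp: Irows_iff_nth)
  then show "Suc k \<le> x!k" by simp
  have "x!k + (d - 1 - k) \<le> x!(d - 1)" "x!(d - 1) \<le> n"
    using Irows_nth_gap[OF assms(1), of k "d - 1"] assms by (auto simp: Irows_iff_nth)
  then show "x!k + d \<le> n + Suc k" using assms(2) by simp
qed

lemma row_le_refl: "row_le x x"
  by (simp add: row_le_def)

lemma row_le_trans: "row_le x y \<Longrightarrow> row_le y z \<Longrightarrow> row_le x z"
  unfolding row_le_def by (metis order_trans)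

lemma row_len_mono: "row_le x y \<Longrightarrow> row_len x \<le> row_len y"
  unfolding row_le_def row_len_def by (auto intro!: sum_mono diff_le_mono)

lemma row_len_strict_mono:
  assumes "x \<in> Irows d n" "y \<in> Irows d n" "row_le x y" "x \<noteq> y"
  shows "row_len x < row_len y"
proof -
  have len: "length x = d" "length y = d" using assms by (auto simp: Irows_length)
  obtain k where k: "k < d" "x!k \<noteq> y!k" using assms(4) len by (metis nth_equalityI)
  then have "x!k - (k + 1) < y!k - (k + 1)"
    using assms(3) len Irows_nth_bounds(1)[OF assms(1) k(1)] by (auto simp: row_le_def)
  then have "(\<Sum>k<d. x!k - (k + 1)) < (\<Sum>k<d. y!k - (k + 1))"
    using assms(3) len k(1)
    by (intro sum_strict_mono_ex1) (auto simp: row_le_def intro!: diff_le_mono)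
  then show ?thesis using len by (simp add: row_len_def)
qed

lemma row_le_row_len_eq_imp_eq:
  "x \<in> Irows d n \<Longrightarrow> y \<in> Irows d n \<Longrightarrow> row_le x y \<Longrightarrow> row_len x = row_len y \<Longrightarrow> x = y"
  using row_len_strict_mono by fastforce

definition row_min :: "nat \<Rightarrow> row" where
  "row_min d = map Suc [0..<d]"

definition row_max :: "nat \<Rightarrow> nat \<Rightarrow> row" where
  "row_max d n = map (\<lambda>k. n - d + Suc k) [0..<d]"

lemma row_min_Irows: "d \<le> n \<Longrightarrow> row_min d \<in> Irows d n"
  by (auto simp: Irows_iff_nth row_min_def)

lemma row_max_Irows: "d \<le> n \<Longrightarrow> row_max d n \<in> Irows d n"
  by (auto simp: Irows_iff_nth row_max_def)

lemma row_min_le: "x \<in> Irows d n \<Longrightarrow> row_le (row_min d) x"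
  using Irows_nth_bounds(1) by (auto simp: row_le_def row_min_def Irows_length)

lemma le_row_max: "x \<in> Irows d n \<Longrightarrow> row_le x (row_max d n)"
  using Irows_nth_bounds(2) by (fastforce simp: row_le_def row_max_def Irows_length)

lemma row_len_row_min: "row_len (row_min d) = 0"
  by (simp add: row_len_def row_min_def)

lemma row_len_row_max: "row_len (row_max d n) = d * (n - d)"
proof -
  have "row_len (row_max d n) = (\<Sum>k<d. n - d)"
    unfolding row_len_def row_max_def by (intro sum.cong) auto
  then show ?thesis by simp
qed

lemma row_len_le: "x \<in> Irows d n \<Longrightarrow> row_len x \<le> d * (n - d)"
  using row_len_mono[OF le_row_max] row_len_row_max by metis

lemma root_op_eq_Some_iff:
  "root_op s h x = Some y \<longleftrightarrow>
     1 \<le> h \<and> h \<le> length x \<and> x!(h - 1) = s \<and> (h = length x \<or> s + 2 \<le> x!h) \<and> y = x[h - 1 := s + 1]"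
  unfolding root_op_def by auto

lemma root_op_SomeD:
  assumes "x \<in> Irows d n" "root_op s h x = Some y"
  shows "1 \<le> h" "h \<le> d" "x!(h - 1) = s" "h < d \<Longrightarrow> s + 2 \<le> x!h" "y = x[h - 1 := s + 1]"
    "y!(h - 1) = s + 1" "length y = d"
  using assms by (auto simp: root_op_eq_Some_iff Irows_length)

lemma root_op_row_le:
  assumes "x \<in> Irows d n" "root_op s h x = Some y"
  shows "row_le x y"
  using root_op_SomeD[OF assms] assms(1) by (auto simp: row_le_def nth_list_update Irows_length)

lemma root_op_row_len:
  assumes "x \<in> Irows d n" "root_op s h x = Some y"
  shows "row_len y = Suc (row_len x)"
proof -
  note y = root_op_SomeD[OF assms]
  have len: "length x = d" using assms(1) by (simp add: Irows_length)
  have hd: "h - 1 \<in> {..<d}" using y by simp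
  have "h \<le> s" using Irows_nth_bounds(1)[OF assms(1), of "h - 1"] y by simp
  then have "y!(h - 1) - h = Suc (x!(h - 1) - h)" using y by simp
  moreover have "(\<Sum>k\<in>{..<d} - {h - 1}. y!k - (k + 1)) = (\<Sum>k\<in>{..<d} - {h - 1}. x!k - (k + 1))"
    using y(5) by (intro sum.cong) auto
  ultimately show ?thesis
    using y(1,7) len hd by (simp add: row_len_def sum.remove[of _ "h - 1"])
qed

lemma root_op_Irows:
  assumes "x \<in> Irows d n" "root_op s h x = Some y" "s < n"
  shows "y \<in> Irows d n"
proof -
  note y = root_op_SomeD[OF assms(1,2)]
  have "\<forall>i. Suc i < d \<longrightarrow> x!i < x!Suc i" "\<forall>i<d. 1 \<le> x!i \<and> x!i \<le> n"
    using assms(1) by (auto simp: Irows_iff_nth)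
  then show ?thesis
    using y assms(3) by (auto simp: Irows_iff_nth nth_list_update)
qed

lemma root_op_unique:
  assumes "x \<in> Irows d n" "root_op s h x = Some y" "root_op s' h' x = Some y"
  shows "s = s'" "h = h'"
proof -
  note A = root_op_SomeD[OF assms(1,2)] and B = root_op_SomeD[OF assms(1,3)]
  show "h = h'"
  proof (rule ccontr)
    assume "h \<noteq> h'"
    then have "y!(h - 1) = x!(h - 1)" using A(1) B(1,5) by simp
    then show False using A(3,6) by simp
  qed
  then show "s = s'" using A(6) B(6) by simp
qed

lemma root_op_target_nth:
  assumes "y \<in> Irows d n" "root_op s k y = Some x"
  shows "k < x!(k - 1)" "1 < k \<Longrightarrow> x!(k - 2) + 1 < x!(k - 1)"
proof -
  note x = root_op_SomeD[OF assms]
  have "k - 1 < d" using x(1,2) by simp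
  then show "k < x!(k - 1)" using Irows_nth_bounds(1)[OF assms(1), of "k - 1"] x(1-3,6) by simp
  assume "1 < k"
  then have "y!(k - 2) < y!Suc (k - 2)" "Suc (k - 2) = k - 1"
    using assms(1) x(2) by (auto simp: Irows_iff_nth)
  then show "x!(k - 2) + 1 < x!(k - 1)" using x \<open>1 < k\<close> by simp
qed

text \<open>The step towards a larger row raises the last entry in which the two rows differ.\<close>

lemma exists_root_op_below:
  assumes "x \<in> Irows d n" "y \<in> Irows d n" "row_le x y" "x \<noteq> y"
  obtains s h z where "root_op s h x = Some z" "z \<in> Irows d n" "row_le z y"
proof -
  have len: "length x = d" "length y = d" using assms by (auto simp: Irows_length)
  let ?K = "{i. i < d \<and> x!i < y!i}"
  have le: "\<And>i. i < d \<Longrightarrow> x!i \<le> y!i" using assms(3) len by (simp add: row_le_def)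
  have "?K \<noteq> {}"
    using assms(4) len le
    by (metis (mono_tags, lifting) empty_Collect_eq le_neq_implies_less nth_equalityI)
  then have "Max ?K \<in> ?K" "\<And>j. j \<in> ?K \<Longrightarrow> j \<le> Max ?K" by (simp_all del: mem_Collect_eq)
  then obtain i where i: "i < d" "x!i < y!i" and "\<And>j. i < j \<Longrightarrow> j < d \<Longrightarrow> \<not> x!j < y!j"
    by (metis (mono_tags, lifting) leD mem_Collect_eq)
  then have above: "\<And>j. i < j \<Longrightarrow> j < d \<Longrightarrow> x!j = y!j" using le by (meson le_neq_implies_less)
  have "x!i + 2 \<le> x!Suc i" if "Suc i < d"
  proof -
    have "y!i < y!Suc i" using that assms(2) by (simp add: Irows_iff_nth)
    then show ?thesis using above[of "Suc i"] that i(2) by simp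
  qed
  then have op: "root_op (x!i) (Suc i) x = Some (x[i := x!i + 1])"
    using len i by (simp add: root_op_eq_Some_iff) (metis Suc_lessI)
  have "y!i \<le> n" using assms(2) i(1) by (simp add: Irows_iff_nth)
  then have "x[i := x!i + 1] \<in> Irows d n" using root_op_Irows[OF assms(1) op] i(2) by simp
  moreover have "row_le (x[i := x!i + 1]) y"
    using assms(3) i len by (auto simp: row_le_def nth_list_update)
  ultimately show ?thesis using op that by blast
qed

lemma root_op_of_row_len_Suc:
  assumes "x \<in> Irows d n" "y \<in> Irows d n" "row_le x y" "row_len y = Suc (row_len x)"
  obtains s h where "root_op s h x = Some y"
proof -
  obtain s h z where z: "root_op s h x = Some z" "z \<in> Irows d n" "row_le z y"
    using exists_root_op_below[OF assms(1-3)] assms(4) by (metis n_not_Suc_n)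
  have "z = y"
    using row_le_row_len_eq_imp_eq[OF z(2) assms(2) z(3)] root_op_row_len[OF assms(1) z(1)] assms(4)
    by simp
  then show ?thesis using z(1) that by blast
qed

definition adm_pairs :: "nat \<Rightarrow> nat \<Rightarrow> (nat \<times> nat) set" where
  "adm_pairs d n = Collect (admissible d n)"

lemma mem_adm_pairs_iff: "(s, h) \<in> adm_pairs d n \<longleftrightarrow> 1 \<le> h \<and> h \<le> d \<and> h \<le> s \<and> s < n - d + h"
  by (simp add: adm_pairs_def admissible_def)

lemma finite_adm_pairs: "finite (adm_pairs d n)"
  by (rule finite_subset[of _ "{..n} \<times> {..d}"]) (auto simp: adm_pairs_def admissible_def)

lemma finite_adm_row: "finite {s. (s, h) \<in> adm_pairs d n \<and> P s}"
  by (rule finite_subset[of _ "{..n}"]) (auto simp: mem_adm_pairs_iff)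

lemma card_adm_pairs: "card (adm_pairs d n) = d * (n - d)"
proof -
  let ?f = "\<lambda>(i, j). (i + 1 + j, i + 1)"
  have inj: "inj_on ?f ({..<d} \<times> {..<n - d})" by (auto simp: inj_on_def)
  have img: "?f ` ({..<d} \<times> {..<n - d}) = adm_pairs d n"
  proof
    show "adm_pairs d n \<subseteq> ?f ` ({..<d} \<times> {..<n - d})"
    proof
      fix p assume "p \<in> adm_pairs d n"
      then obtain s h where "p = (s, h)" "1 \<le> h" "h \<le> d" "h \<le> s" "s < n - d + h"
        by (cases p) (auto simp: mem_adm_pairs_iff)
      then have "(h - 1, s - h) \<in> {..<d} \<times> {..<n - d}" "p = ?f (h - 1, s - h)" by auto
      then show "p \<in> ?f ` ({..<d} \<times> {..<n - d})" by blast
    qed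
  qed (auto simp: mem_adm_pairs_iff)
  have "card (adm_pairs d n) = card ({..<d} \<times> {..<n - d})" using card_image[OF inj] img by simp
  then show ?thesis by (simp add: card_cartesian_product)
qed

lemma root_op_adm_pairs:
  assumes "x \<in> Irows d n" "y \<in> Irows d n" "root_op s h x = Some y"
  shows "(s, h) \<in> adm_pairs d n"
proof -
  note y = root_op_SomeD[OF assms(1,3)]
  have "h - 1 < d" using y(1,2) by simp
  have "h \<le> s" using Irows_nth_bounds(1)[OF assms(1), of "h - 1"] y(1-3) by simp
  moreover have "s < n - d + h" using Irows_nth_bounds(2)[OF assms(2) \<open>h - 1 < d\<close>] y(1,2,6) by simp
  ultimately show ?thesis using y(1,2) by (simp add: mem_adm_pairs_iff)
qed

text \<open>\<open>adm_less a b\<close>: every maximal chain uses \<open>a\<close> before \<open>b\<close>. This is the product order in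
  the coordinates \<open>(d - h, s - h)\<close> of the rectangle \<open>d \<times> (n - d)\<close>.\<close>

definition adm_less :: "nat \<times> nat \<Rightarrow> nat \<times> nat \<Rightarrow> bool" where
  "adm_less a b \<longleftrightarrow> snd b \<le> snd a \<and> fst a + snd b \<le> fst b + snd a \<and> a \<noteq> b"

section \<open>Inversion sets and the right weak order\<close>

abbreviation adj_transp :: "nat \<Rightarrow> nat \<Rightarrow> nat" where
  "adj_transp a \<equiv> Transposition.transpose a (Suc a)"

text \<open>The pairs of values that appear in the wrong order in the one-line notation of \<open>p\<close>, i.e.
  the inversions of \<open>p\<^sup>-\<^sup>1\<close>. These, not the inversions by position, grow along the right
  weak order.\<close>

definition inv_set :: "nat \<Rightarrow> (nat \<Rightarrow> nat) \<Rightarrow> (nat \<times> nat) set" where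
  "inv_set r p = {(x, y). x \<in> {1..r} \<and> y \<in> {1..r} \<and> x < y \<and> inv p y < inv p x}"

lemma finite_inv_set: "finite (inv_set r p)"
  by (rule finite_subset[of _ "{1..r} \<times> {1..r}"]) (auto simp: inv_set_def)

lemma inv_set_id: "inv_set r id = {}"
  by (auto simp: inv_set_def)

lemma word_prod_Nil: "word_prod [] = id"
  by (simp add: word_prod_def)

lemma word_prod_Cons: "word_prod (a # w) = adj_transp a \<circ> word_prod w"
  by (simp add: word_prod_def)

lemma word_prod_append: "word_prod (w @ v) = word_prod w \<circ> word_prod v"
  by (induction w) (simp_all add: word_prod_Nil word_prod_Cons o_assoc)

lemma word_prod_snoc: "word_prod (w @ [a]) = word_prod w \<circ> adj_transp a"
  by (simp add: word_prod_append word_prod_Cons word_prod_Nil)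

lemma adj_transp_permutes: "a \<in> {1..<r} \<Longrightarrow> adj_transp a permutes {1..r}"
  by (rule permutes_swap_id) auto

lemma word_prod_permutes: "is_word r w \<Longrightarrow> word_prod w permutes {1..r}"
proof (induction w)
  case (Cons a w)
  then have "word_prod w permutes {1..r}" "adj_transp a permutes {1..r}"
    using adj_transp_permutes by (auto simp: is_word_def)
  then show ?case unfolding word_prod_Cons by (rule permutes_compose)
qed (simp add: word_prod_Nil permutes_id)

lemma adj_transp_less_iff:
  assumes "i \<noteq> j" "{i, j} \<noteq> {a, Suc a}"
  shows "adj_transp a j < adj_transp a i \<longleftrightarrow> j < i"
  using assms by (auto simp: transpose_def doubleton_eq_iff)

lemma adjacent_pair_notin_inv_set:
  assumes "p permutes {1..r}"
  shows "(p a, p (Suc a)) \<notin> inv_set r p"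
  using assms by (simp add: inv_set_def permutes_inverses)

lemma inv_comp_adj_transp:
  "p permutes A \<Longrightarrow> inv (p \<circ> adj_transp a) = adj_transp a \<circ> inv p"
  using o_inv_distrib[OF permutes_bij bij_transpose] by simp

lemma inv_set_comp_adj_transp_other:
  assumes p: "p permutes {1..r}" and xy: "{x, y} \<noteq> {p a, p (Suc a)}"
  shows "(x, y) \<in> inv_set r (p \<circ> adj_transp a) \<longleftrightarrow> (x, y) \<in> inv_set r p"
proof -
  have p_inv: "\<And>z. p (inv p z) = z" using permutes_inverses(1)[OF p] .
  have "{inv p x, inv p y} \<noteq> {a, Suc a}"
  proof
    assume "{inv p x, inv p y} = {a, Suc a}"
    then have "p ` {inv p x, inv p y} = p ` {a, Suc a}" by simp
    then show False using xy p_inv by simp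
  qed
  moreover have "x \<noteq> y \<Longrightarrow> inv p x \<noteq> inv p y" using p_inv by metis
  ultimately show ?thesis
    using adj_transp_less_iff[of "inv p x" "inv p y" a]
    by (auto simp: inv_set_def inv_comp_adj_transp[OF p])
qed

lemma inv_set_comp_adj_transp_ascent:
  assumes p: "p permutes {1..r}" and a: "a \<in> {1..<r}" and asc: "p a < p (Suc a)"
  shows "inv_set r (p \<circ> adj_transp a) = insert (p a, p (Suc a)) (inv_set r p)"
proof (intro set_eqI)
  fix z :: "nat \<times> nat"
  obtain x y where z: "z = (x, y)" by (cases z)
  have "p a \<in> {1..r}" "p (Suc a) \<in> {1..r}" using a permutes_in_image[OF p] by auto
  then have new: "(p a, p (Suc a)) \<in> inv_set r (p \<circ> adj_transp a)"
    using asc p by (simp add: inv_set_def inv_comp_adj_transp permutes_inverses)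
  have reversed: "(p (Suc a), p a) \<notin> inv_set r (p \<circ> adj_transp a)" "(p (Suc a), p a) \<notin> inv_set r p"
    using asc by (simp_all add: inv_set_def)
  show "z \<in> inv_set r (p \<circ> adj_transp a) \<longleftrightarrow> z \<in> insert (p a, p (Suc a)) (inv_set r p)"
  proof (cases "(x, y) = (p a, p (Suc a)) \<or> (x, y) = (p (Suc a), p a)")
    case True
    then show ?thesis using z new reversed asc by (elim disjE) simp_all
  next
    case False
    then have "{x, y} \<noteq> {p a, p (Suc a)}" by (auto simp: doubleton_eq_iff)
    then show ?thesis using inv_set_comp_adj_transp_other[OF p] z False by auto
  qed
qed

lemma inv_set_comp_adj_transp_descent:
  assumes p: "p permutes {1..r}" and a: "a \<in> {1..<r}" and desc: "p (Suc a) < p a"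
  shows "inv_set r p = insert (p (Suc a), p a) (inv_set r (p \<circ> adj_transp a))"
    "(p (Suc a), p a) \<notin> inv_set r (p \<circ> adj_transp a)"
proof -
  let ?q = "p \<circ> adj_transp a"
  have q: "?q permutes {1..r}" using permutes_compose[OF adj_transp_permutes[OF a] p] .
  have "?q a = p (Suc a)" "?q (Suc a) = p a" "?q \<circ> adj_transp a = p"
    by (auto simp: o_assoc[symmetric])
  then show "inv_set r p = insert (p (Suc a), p a) (inv_set r ?q)"
    "(p (Suc a), p a) \<notin> inv_set r ?q"
    using inv_set_comp_adj_transp_ascent[OF q a] adjacent_pair_notin_inv_set[OF q, of a] desc
    by simp_all
qed

lemma card_inv_set_comp_adj_transp:
  assumes p: "p permutes {1..r}" and a: "a \<in> {1..<r}"
  shows "p a < p (Suc a) \<Longrightarrow> card (inv_set r (p \<circ> adj_transp a)) = card (inv_set r p) + 1"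
    "p (Suc a) < p a \<Longrightarrow> card (inv_set r p) = card (inv_set r (p \<circ> adj_transp a)) + 1"
  using inv_set_comp_adj_transp_ascent[OF p a] inv_set_comp_adj_transp_descent[OF p a]
    adjacent_pair_notin_inv_set[OF p] finite_inv_set by simp_all

lemma card_inv_set_word_prod_le:
  "is_word r w \<Longrightarrow> card (inv_set r (word_prod w)) \<le> length w"
proof (induction w rule: rev_induct)
  case (snoc a w)
  then have w: "is_word r w" and a: "a \<in> {1..<r}" by (auto simp: is_word_def)
  have "word_prod w a \<noteq> word_prod w (Suc a)"
    using inj_eq[OF permutes_inj[OF word_prod_permutes[OF w]]] by simp
  then have "card (inv_set r (word_prod w \<circ> adj_transp a)) \<le> card (inv_set r (word_prod w)) + 1"
    using card_inv_set_comp_adj_transp[OF word_prod_permutes[OF w] a]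
    by (cases "word_prod w a < word_prod w (Suc a)") auto
  then show ?case
    using snoc.IH[OF w] unfolding word_prod_snoc length_append_singleton by linarith
qed (simp add: word_prod_Nil inv_set_id)

lemma reduced_if_length_eq_card_inv_set:
  "is_word r w \<Longrightarrow> length w = card (inv_set r (word_prod w)) \<Longrightarrow> reduced r w"
  unfolding reduced_def using card_inv_set_word_prod_le by metis

lemma permutes_increasing_eq_id:
  assumes g: "g permutes {1..r}" and inc: "\<And>a. a \<in> {1..<r} \<Longrightarrow> g a < g (Suc a)"
    and x: "x \<in> {1..r}"
  shows "g x = x"
proof -
  have range: "\<And>x. x \<in> {1..r} \<Longrightarrow> g x \<in> {1..r}" using permutes_in_image[OF g] by simp
  have lower: "x \<le> g x" if "x \<in> {1..r}" for x
    using that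
  proof (induction x)
    case (Suc x)
    then show ?case using range[of 1] inc[of x] by (cases "x = 0") auto
  qed simp
  have upper: "g (r - k) \<le> r - k" if "k < r" for k
    using that
  proof (induction k)
    case (Suc k)
    then have "g (r - Suc k) < g (Suc (r - Suc k))" using inc[of "r - Suc k"] by simp
    moreover have "Suc (r - Suc k) = r - k" using Suc by simp
    ultimately show ?case using Suc by simp
  qed (use range[of r] in auto)
  show ?thesis using lower[OF x] upper[of "r - x"] x by simp
qed

lemma inv_set_subset_exists_ascent:
  assumes u: "u permutes {1..r}" and v: "v permutes {1..r}"
    and sub: "inv_set r u \<subseteq> inv_set r v" and ne: "u \<noteq> v"
  shows "\<exists>a\<in>{1..<r}. u a < u (Suc a) \<and> (u a, u (Suc a)) \<in> inv_set r v"
proof (rule ccontr)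
  assume no_ascent: "\<not> ?thesis"
  define g where "g = inv v \<circ> u"
  have g: "g permutes {1..r}" unfolding g_def by (rule permutes_compose[OF u permutes_inv[OF v]])
  have "g a < g (Suc a)" if a: "a \<in> {1..<r}" for a
  proof -
    have ua: "u a \<in> {1..r}" "u (Suc a) \<in> {1..r}" using a permutes_in_image[OF u] by auto
    have "g a \<noteq> g (Suc a)" using inj_eq[OF permutes_inj[OF g]] by simp
    moreover have "\<not> inv v (u (Suc a)) < inv v (u a)"
    proof (cases "u a < u (Suc a)")
      case True
      then have "(u a, u (Suc a)) \<notin> inv_set r v" using no_ascent a by blast
      then show ?thesis using ua True by (simp add: inv_set_def)
    next
      case False
      moreover have "u a \<noteq> u (Suc a)" using inj_eq[OF permutes_inj[OF u]] by simp
      ultimately have "(u (Suc a), u a) \<in> inv_set r u"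
        using ua by (simp add: inv_set_def permutes_inverses[OF u])
      then have "(u (Suc a), u a) \<in> inv_set r v" using sub by blast
      then show ?thesis by (simp add: inv_set_def)
    qed
    ultimately show ?thesis by (simp add: g_def)
  qed
  then have g_id: "inv v (u x) = x" if "x \<in> {1..r}" for x
    using permutes_increasing_eq_id[OF g _ that] by (simp add: g_def)
  have "u x = v x" for x
  proof (cases "x \<in> {1..r}")
    case True
    have "u x = v (inv v (u x))" using permutes_inverses(1)[OF v] by simp
    then show ?thesis using g_id[OF True] by simp
  qed (simp add: permutes_not_in[OF u] permutes_not_in[OF v])
  then show False using ne by auto
qed

lemma exists_word_between:
  assumes "u permutes {1..r}" "v permutes {1..r}" "inv_set r u \<subseteq> inv_set r v"
  shows "\<exists>w. is_word r w \<and> length w = card (inv_set r v) - card (inv_set r u) \<and> u \<circ> word_prod w = v"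
  using assms
proof (induction "card (inv_set r v) - card (inv_set r u)" arbitrary: u)
  case 0
  then have "inv_set r u = inv_set r v" using card_seteq[OF finite_inv_set] by simp
  then have "u = v"
    using inv_set_subset_exists_ascent[OF 0(2,3)] adjacent_pair_notin_inv_set[OF 0(2)] by auto
  then show ?case by (intro exI[of _ "[]"]) (simp add: is_word_def word_prod_Nil)
next
  case (Suc N)
  have "u \<noteq> v" using Suc(2) by auto
  then obtain a where a: "a \<in> {1..<r}" "u a < u (Suc a)" "(u a, u (Suc a)) \<in> inv_set r v"
    using inv_set_subset_exists_ascent[OF Suc(3,4,5)] by blast
  let ?u = "u \<circ> adj_transp a"
  have u': "?u permutes {1..r}" using permutes_compose[OF adj_transp_permutes[OF a(1)] Suc(3)] .
  have sub': "inv_set r ?u \<subseteq> inv_set r v"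
    using inv_set_comp_adj_transp_ascent[OF Suc(3) a(1,2)] Suc(5) a(3) by auto
  have c: "card (inv_set r ?u) = card (inv_set r u) + 1"
    using card_inv_set_comp_adj_transp(1)[OF Suc(3) a(1,2)] .
  have "N = card (inv_set r v) - card (inv_set r ?u)" using Suc(2) c by simp
  then obtain w where w: "is_word r w" "length w = card (inv_set r v) - card (inv_set r ?u)"
    "?u \<circ> word_prod w = v"
    using Suc(1)[OF _ u' Suc(4) sub'] by blast
  then show ?case using a c Suc(2)
    by (intro exI[of _ "a # w"]) (auto simp: is_word_def word_prod_Cons o_assoc)
qed

lemma exists_reduced_word:
  assumes "p permutes {1..r}"
  obtains w where "is_word r w" "length w = card (inv_set r p)" "word_prod w = p"
  using exists_word_between[OF permutes_id assms] by (auto simp: inv_set_id)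

lemma inv_set_prefix_subset:
  assumes "is_word r w" "length w = card (inv_set r (word_prod w))"
  shows "inv_set r (word_prod (take k w)) \<subseteq> inv_set r (word_prod w)"
  using assms
proof (induction w arbitrary: k rule: rev_induct)
  case (snoc a w)
  then have w: "is_word r w" and a: "a \<in> {1..<r}" by (auto simp: is_word_def)
  note p = word_prod_permutes[OF w]
  have len: "card (inv_set r (word_prod w \<circ> adj_transp a)) = length w + 1"
    using snoc(3) unfolding word_prod_snoc length_append_singleton by linarith
  have asc: "word_prod w a < word_prod w (Suc a)"
  proof (rule ccontr)
    assume "\<not> ?thesis"
    then have "word_prod w (Suc a) < word_prod w a"
      using inj_eq[OF permutes_inj[OF p], of a "Suc a"] by simp
    then show False
      using card_inv_set_comp_adj_transp(2)[OF p a] len card_inv_set_word_prod_le[OF w] by simp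
  qed
  have "length w = card (inv_set r (word_prod w))"
    using card_inv_set_comp_adj_transp(1)[OF p a asc] len by simp
  then have "inv_set r (word_prod (take k w)) \<subseteq> inv_set r (word_prod w)" using snoc.IH[OF w]
    by blast
  moreover have "inv_set r (word_prod w) \<subseteq> inv_set r (word_prod (w @ [a]))"
    unfolding word_prod_snoc inv_set_comp_adj_transp_ascent[OF p a asc] by blast
  ultimately show ?case by (cases "k \<le> length w") auto
qed simp

lemma weak_le_id:
  assumes "p permutes {1..r}"
  shows "weak_le r id p"
proof -
  obtain w where w: "is_word r w" "length w = card (inv_set r p)" "word_prod w = p"
    using exists_reduced_word[OF assms] .
  moreover have "reduced r []" by (simp add: reduced_def is_word_def)
  ultimately show ?thesis unfolding weak_le_def
    using reduced_if_length_eq_card_inv_set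
    by (intro exI[of _ w] exI[of _ 0]) (simp add: word_prod_Nil)
qed

lemma weak_le_if_inv_set_subset:
  assumes p: "p permutes {1..r}" and q: "q permutes {1..r}" and sub: "inv_set r p \<subseteq> inv_set r q"
  shows "weak_le r p q"
proof -
  obtain w1 where w1: "is_word r w1" "length w1 = card (inv_set r p)" "word_prod w1 = p"
    using exists_reduced_word[OF p] .
  obtain w2 where w2: "is_word r w2" "length w2 = card (inv_set r q) - card (inv_set r p)"
    "p \<circ> word_prod w2 = q"
    using exists_word_between[OF p q sub] by blast
  have "card (inv_set r p) \<le> card (inv_set r q)" by (rule card_mono[OF finite_inv_set sub])
  then have "reduced r (w1 @ w2)" "word_prod (w1 @ w2) = q"
    using w1 w2 reduced_if_length_eq_card_inv_set[of r "w1 @ w2"]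
    by (auto simp: is_word_def word_prod_append)
  moreover have "reduced r w1" using reduced_if_length_eq_card_inv_set w1 by simp
  ultimately show ?thesis
    unfolding weak_le_def using w1 by (intro exI[of _ "w1 @ w2"] exI[of _ "length w1"]) simp
qed

lemma inv_set_subset_if_weak_le:
  assumes q: "q permutes {1..r}" and le: "weak_le r p q"
  shows "inv_set r p \<subseteq> inv_set r q"
proof -
  obtain w k where w: "reduced r w" "word_prod w = q" "word_prod (take k w) = p"
    using le unfolding weak_le_def by blast
  obtain w0 where w0: "is_word r w0" "length w0 = card (inv_set r q)" "word_prod w0 = q"
    using exists_reduced_word[OF q] .
  have "is_word r w" using w(1) by (simp add: reduced_def)
  moreover have "length w = card (inv_set r (word_prod w))"
    using w w0 card_inv_set_word_prod_le[OF \<open>is_word r w\<close>] unfolding reduced_def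
    by (metis le_antisym)
  ultimately show ?thesis using inv_set_prefix_subset w by blast
qed

section \<open>Maximal chains as paths of root operator steps\<close>

definition op_path :: "nat \<Rightarrow> nat \<Rightarrow> (nat \<Rightarrow> row) \<Rightarrow> bool" where
  "op_path d n x \<longleftrightarrow> x 0 = row_min d \<and> (\<forall>t \<le> d * (n - d). x t \<in> Irows d n) \<and>
     (\<forall>t < d * (n - d). \<exists>s h. root_op s h (x t) = Some (x (Suc t)))"

lemma op_path_row_len:
  assumes "op_path d n x" "t \<le> d * (n - d)"
  shows "row_len (x t) = t"
  using assms(2)
proof (induction t)
  case (Suc t)
  have "x t \<in> Irows d n" "\<exists>s h. root_op s h (x t) = Some (x (Suc t))"
    using assms(1) Suc(2) by (auto simp: op_path_def)
  then show ?case using Suc root_op_row_len by fastforce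
qed (use assms(1) in \<open>simp add: op_path_def row_len_row_min\<close>)

lemma op_path_mono:
  assumes "op_path d n x" "a \<le> b" "b \<le> d * (n - d)"
  shows "row_le (x a) (x b)"
  using assms(2,3)
proof (induction b)
  case (Suc b)
  show ?case
  proof (cases "a = Suc b")
    case False
    then have "row_le (x a) (x b)" using Suc by simp
    moreover have "x b \<in> Irows d n" "\<exists>s h. root_op s h (x b) = Some (x (Suc b))"
      using assms(1) Suc(3) by (auto simp: op_path_def)
    ultimately show ?thesis using root_op_row_le row_le_trans by blast
  qed (simp add: row_le_refl)
qed (simp add: row_le_refl)

lemma op_path_image_Cset:
  assumes "op_path d n x"
  shows "x ` {0..d * (n - d)} \<in> Cset d n"
proof -
  let ?S = "x ` {0..d * (n - d)}"
  have I: "\<And>t. t \<le> d * (n - d) \<Longrightarrow> x t \<in> Irows d n" using assms by (simp add: op_path_def)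
  have chain: "is_chain d n ?S"
    unfolding is_chain_def
  proof (intro conjI ballI)
    show "?S \<subseteq> Irows d n" using I by auto
    fix y z assume "y \<in> ?S" "z \<in> ?S"
    then obtain a b where "y = x a" "z = x b" "a \<le> d * (n - d)" "b \<le> d * (n - d)" by auto
    then show "row_le y z \<or> row_le z y" using op_path_mono[OF assms] by (cases "a \<le> b") auto
  qed
  have "T = ?S" if T: "is_chain d n T" "?S \<subseteq> T" for T
  proof (intro equalityI subsetI)
    fix y assume y: "y \<in> T"
    then have yI: "y \<in> Irows d n" using T by (auto simp: is_chain_def)
    define l where "l = row_len y"
    have l: "l \<le> d * (n - d)" using row_len_le[OF yI] l_def by simp
    moreover have "x l \<in> T" using T(2) l by auto
    ultimately have "row_le y (x l) \<or> row_le (x l) y" using T(1) y by (simp add: is_chain_def)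
    moreover have "row_len (x l) = row_len y" using op_path_row_len[OF assms l] l_def by simp
    ultimately have "y = x l"
      using row_le_row_len_eq_imp_eq[OF yI I[OF l]] row_le_row_len_eq_imp_eq[OF I[OF l] yI] by auto
    then show "y \<in> ?S" using l by auto
  qed (use T(2) in blast)
  then show ?thesis using chain by (simp add: Cset_def is_max_chain_def)
qed

lemma chain_elem_op_path_image:
  assumes "op_path d n x" "t \<le> d * (n - d)"
  shows "chain_elem (x ` {0..d * (n - d)}) t = x t"
  unfolding chain_elem_def
proof (rule the_equality)
  fix z assume "z \<in> x ` {0..d * (n - d)} \<and> row_len z = t"
  then show "z = x t" using op_path_row_len[OF assms(1)] by auto
qed (use assms op_path_row_len[OF assms(1)] in auto)

lemma max_chain_Irows: "S \<in> Cset d n \<Longrightarrow> S \<subseteq> Irows d n"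
  by (simp add: Cset_def is_max_chain_def is_chain_def)

lemma max_chain_memI:
  assumes "S \<in> Cset d n" "c \<in> Irows d n" "\<And>y. y \<in> S \<Longrightarrow> row_le y c \<or> row_le c y"
  shows "c \<in> S"
proof -
  have "is_chain d n (insert c S)"
    using assms by (auto simp: Cset_def is_max_chain_def is_chain_def row_le_refl)
  then show ?thesis using assms(1) by (auto simp: Cset_def is_max_chain_def)
qed

lemma max_chain_row_le_of_row_len:
  assumes "S \<in> Cset d n" "y \<in> S" "z \<in> S" "row_len y \<le> row_len z"
  shows "row_le y z"
proof -
  have "row_le y z \<or> row_le z y" using assms(1-3)
    by (auto simp: Cset_def is_max_chain_def is_chain_def)
  moreover have "y = z" if "row_le z y"
  proof -
    have "row_len z = row_len y" using row_len_mono[OF that] assms(4) by simp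
    then show ?thesis
      using row_le_row_len_eq_imp_eq[OF _ _ that] max_chain_Irows[OF assms(1)] assms(2,3) by auto
  qed
  ultimately show ?thesis using row_le_refl by blast
qed

lemma max_chain_row_len_inj:
  assumes "S \<in> Cset d n" "y \<in> S" "z \<in> S" "row_len y = row_len z"
  shows "y = z"
proof -
  have "y \<in> Irows d n" "z \<in> Irows d n" using assms max_chain_Irows by blast+
  then show ?thesis
    using row_le_row_len_eq_imp_eq max_chain_row_le_of_row_len[OF assms(1-3)] assms(4) by simp
qed

lemma max_chain_mem_between:
  assumes S: "S \<in> Cset d n" and a: "a \<in> S" and b: "b \<in> S"
    and c: "c \<in> Irows d n" "row_le a c" "row_le c b"
    and gap: "\<And>y. y \<in> S \<Longrightarrow> row_len y \<le> row_len a \<or> row_len b \<le> row_len y"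
  shows "c \<in> S"
proof (rule max_chain_memI[OF S c(1)])
  fix y assume y: "y \<in> S"
  show "row_le y c \<or> row_le c y"
  proof (cases "row_len y \<le> row_len a")
    case True
    then have "row_le y a" using max_chain_row_le_of_row_len[OF S y a] by simp
    then show ?thesis using c(2) row_le_trans by blast
  next
    case False
    then have "row_le b y" using max_chain_row_le_of_row_len[OF S b y] gap[OF y] by simp
    then show ?thesis using c(3) row_le_trans by blast
  qed
qed

locale grassmann_poset =
  fixes d n :: nat
  assumes d_le_n: "d \<le> n"

context grassmann_poset
begin

lemma row_min_mem_max_chain: "S \<in> Cset d n \<Longrightarrow> row_min d \<in> S"
  using max_chain_memI row_min_Irows[OF d_le_n] row_min_le max_chain_Irows by blast

lemma row_max_mem_max_chain: "S \<in> Cset d n \<Longrightarrow> row_max d n \<in> S"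
  using max_chain_memI row_max_Irows[OF d_le_n] le_row_max max_chain_Irows by blast

lemma max_chain_has_row_len:
  assumes S: "S \<in> Cset d n" and t: "t \<le> d * (n - d)"
  shows "\<exists>y\<in>S. row_len y = t"
  using t
proof (induction t)
  case 0
  then show ?case using row_min_mem_max_chain[OF S] row_len_row_min by blast
next
  case (Suc t)
  then obtain a where a: "a \<in> S" "row_len a = t" by auto
  let ?longer = "\<lambda>l. t < l \<and> (\<exists>y\<in>S. row_len y = l)"
  have "?longer (row_len (row_max d n))"
    using row_max_mem_max_chain[OF S] row_len_row_max Suc(2) by auto
  then have "?longer (Least ?longer)" by (rule LeastI)
  then obtain b where b: "b \<in> S" "t < row_len b" "row_len b = Least ?longer" by auto
  have gap: "row_len y \<le> row_len a \<or> row_len b \<le> row_len y" if "y \<in> S" for y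
  proof (cases "row_len y \<le> t")
    case False
    then have "?longer (row_len y)" using that by auto
    then show ?thesis using Least_le[of ?longer] b(3) by simp
  qed (use a in simp)
  have aI: "a \<in> Irows d n" and bI: "b \<in> Irows d n" using a b max_chain_Irows[OF S] by auto
  have ab: "row_le a b" using max_chain_row_le_of_row_len[OF S a(1) b(1)] a b by simp
  have "a \<noteq> b" using a(2) b(2) by auto
  then obtain s h c where c: "root_op s h a = Some c" "c \<in> Irows d n" "row_le c b"
    using exists_root_op_below[OF aI bI ab] by blast
  have "c \<in> S"
    using max_chain_mem_between[OF S a(1) b(1) c(2) root_op_row_le[OF aI c(1)] c(3)] gap by blast
  then show ?case using root_op_row_len[OF aI c(1)] a by auto
qed

lemma chain_elem_mem:
  assumes "S \<in> Cset d n" "t \<le> d * (n - d)"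
  shows "chain_elem S t \<in> S" "row_len (chain_elem S t) = t"
proof -
  obtain y where y: "y \<in> S" "row_len y = t" using max_chain_has_row_len[OF assms] by blast
  have "chain_elem S t = y"
    unfolding chain_elem_def
    by (rule the_equality) (use y max_chain_row_len_inj[OF assms(1)] in auto)
  then show "chain_elem S t \<in> S" "row_len (chain_elem S t) = t" using y by simp_all
qed

lemma max_chain_eq_image:
  assumes "S \<in> Cset d n"
  shows "S = chain_elem S ` {0..d * (n - d)}"
proof
  show "S \<subseteq> chain_elem S ` {0..d * (n - d)}"
  proof
    fix y assume y: "y \<in> S"
    then have l: "row_len y \<le> d * (n - d)" using row_len_le max_chain_Irows[OF assms] by blast
    then have "chain_elem S (row_len y) = y"
      using chain_elem_mem[OF assms l] max_chain_row_len_inj[OF assms] y by metis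
    then show "y \<in> chain_elem S ` {0..d * (n - d)}" using l by force
  qed
qed (use chain_elem_mem[OF assms] in auto)

lemma chain_elem_Irows:
  "S \<in> Cset d n \<Longrightarrow> t \<le> d * (n - d) \<Longrightarrow> chain_elem S t \<in> Irows d n"
  using chain_elem_mem max_chain_Irows by blast

lemma op_path_chain_elem:
  assumes S: "S \<in> Cset d n"
  shows "op_path d n (chain_elem S)"
  unfolding op_path_def
proof (intro conjI allI impI)
  show "chain_elem S 0 = row_min d"
    using max_chain_row_len_inj[OF S chain_elem_mem(1)[OF S] row_min_mem_max_chain[OF S]]
      chain_elem_mem(2)[OF S] row_len_row_min by simp
  show "\<And>t. t \<le> d * (n - d) \<Longrightarrow> chain_elem S t \<in> Irows d n" using chain_elem_Irows[OF S] .
  fix t assume t: "t < d * (n - d)"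
  let ?a = "chain_elem S t" and ?b = "chain_elem S (Suc t)"
  have ab: "?a \<in> S" "?b \<in> S" "row_len ?a = t" "row_len ?b = Suc t" using chain_elem_mem[OF S] t
    by auto
  have "?a \<in> Irows d n" "?b \<in> Irows d n" using chain_elem_Irows[OF S] t by auto
  moreover have "row_le ?a ?b" using max_chain_row_le_of_row_len[OF S ab(1,2)] ab(3,4) by simp
  ultimately obtain s h where "root_op s h ?a = Some ?b" using root_op_of_row_len_Suc ab(3,4)
    by metis
  then show "\<exists>s h. root_op s h ?a = Some ?b" by blast
qed

lemma chain_elem_mono:
  "S \<in> Cset d n \<Longrightarrow> a \<le> b \<Longrightarrow> b \<le> d * (n - d) \<Longrightarrow> row_le (chain_elem S a) (chain_elem S b)"
  using op_path_mono[OF op_path_chain_elem] .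

lemma step_pair_eq_iff:
  assumes S: "S \<in> Cset d n" and t: "t \<in> {1..d * (n - d)}"
  shows "step_pair d n S t = (s, h) \<longleftrightarrow> root_op s h (chain_elem S (t - 1)) = Some (chain_elem S t)"
proof -
  let ?x = "chain_elem S"
  have I: "?x (t - 1) \<in> Irows d n" "?x t \<in> Irows d n" using chain_elem_Irows[OF S] t by auto
  have "t - 1 < d * (n - d)" using t by auto
  then have "\<exists>s h. root_op s h (?x (t - 1)) = Some (?x (Suc (t - 1)))"
    using op_path_chain_elem[OF S] by (simp only: op_path_def)
  moreover have "Suc (t - 1) = t" using t by simp
  ultimately obtain s0 h0 where op: "root_op s0 h0 (?x (t - 1)) = Some (?x t)" by auto
  note unique = root_op_unique[OF I(1) op]
  have "step_pair d n S t = (s0, h0)"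
    unfolding step_pair_def
  proof (rule the_equality)
    show "admissible d n (s0, h0) \<and>
        root_op (fst (s0, h0)) (snd (s0, h0)) (?x (t - 1)) = Some (?x t)"
      using root_op_adm_pairs[OF I op] op by (simp add: adm_pairs_def)
  next
    fix p assume "admissible d n p \<and> root_op (fst p) (snd p) (?x (t - 1)) = Some (?x t)"
    then have "s0 = fst p" "h0 = snd p" using unique by blast+
    then show "p = (s0, h0)" by simp
  qed
  moreover have "root_op s h (?x (t - 1)) = Some (?x t) \<longleftrightarrow> (s0, h0) = (s, h)"
    using unique[of s h] op by blast
  ultimately show ?thesis by simp
qed

lemma step_pair_adm_pairs:
  assumes S: "S \<in> Cset d n" and t: "t \<in> {1..d * (n - d)}"
  shows "step_pair d n S t \<in> adm_pairs d n"
proof -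
  obtain s h where sh: "step_pair d n S t = (s, h)" by (cases "step_pair d n S t")
  have "chain_elem S (t - 1) \<in> Irows d n" "chain_elem S t \<in> Irows d n"
    using chain_elem_Irows[OF S] t by auto
  moreover have "root_op s h (chain_elem S (t - 1)) = Some (chain_elem S t)"
    using sh step_pair_eq_iff[OF S t] by simp
  ultimately show ?thesis using root_op_adm_pairs sh by simp
qed

lemma step_pairD:
  assumes S: "S \<in> Cset d n" and t: "t \<in> {1..d * (n - d)}" and sh: "step_pair d n S t = (s, h)"
  shows "1 \<le> h" "h \<le> d" "chain_elem S (t - 1) ! (h - 1) = s" "chain_elem S t ! (h - 1) = s + 1"
    "h < d \<Longrightarrow> s + 2 \<le> chain_elem S (t - 1) ! h"
    "chain_elem S t = (chain_elem S (t - 1))[h - 1 := s + 1]"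
  using root_op_SomeD[OF chain_elem_Irows[OF S] step_pair_eq_iff[OF S t, THEN iffD1, OF sh]] t
  by auto

lemma step_pair_order:
  assumes S: "S \<in> Cset d n" and t: "t \<in> {1..d * (n - d)}" "t' \<in> {1..d * (n - d)}"
    and less: "adm_less (step_pair d n S t) (step_pair d n S t')"
  shows "t < t'"
proof (rule ccontr)
  assume "\<not> t < t'"
  then have "t' - 1 \<le> t - 1" by simp
  obtain s h where p: "step_pair d n S t = (s, h)" by (cases "step_pair d n S t")
  obtain s' h' where p': "step_pair d n S t' = (s', h')" by (cases "step_pair d n S t'")
  have less': "h' \<le> h" "s + h' \<le> s' + h" "(s, h) \<noteq> (s', h')"
    using less unfolding p p' adm_less_def by simp_all
  note F = step_pairD[OF S t(1) p] and F' = step_pairD[OF S t(2) p']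
  let ?y = "chain_elem S (t' - 1)"
  have "t' - 1 \<le> d * (n - d)" using t(2) by auto
  then have yI: "?y \<in> Irows d n" using chain_elem_Irows[OF S] by blast
  have "s + 1 \<le> ?y ! (h - 1)"
  proof (cases "h = h'")
    case True
    then have "s < s'" using less' by auto
    then show ?thesis using F'(3) True by simp
  next
    case False
    then have "h' < h" using less'(1) by simp
    then have "s' + 2 \<le> ?y ! h'" using F'(5) F(2) by simp
    moreover have "?y ! h' + (h - 1 - h') \<le> ?y ! (h - 1)"
      using Irows_nth_gap[OF yI, of h' "h - 1"] \<open>h' < h\<close> F(2) by simp
    ultimately show ?thesis using less'(2) \<open>h' < h\<close> by simp
  qed
  moreover have "row_le ?y (chain_elem S (t - 1))"
    using chain_elem_mono[OF S \<open>t' - 1 \<le> t - 1\<close>] t(1) by auto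
  then have "?y ! (h - 1) \<le> chain_elem S (t - 1) ! (h - 1)"
    using F(1,2) yI by (simp add: row_le_def Irows_length)
  ultimately show False using F(3) by simp
qed

lemma bij_betw_step_pair:
  assumes S: "S \<in> Cset d n"
  shows "bij_betw (step_pair d n S) {1..d * (n - d)} (adm_pairs d n)"
proof -
  have le_imp_eq: "t = t'" if t: "t \<in> {1..d * (n - d)}" "t' \<in> {1..d * (n - d)}" "t \<le> t'"
    and eq: "step_pair d n S t = step_pair d n S t'" for t t'
  proof (rule ccontr)
    assume "t \<noteq> t'"
    obtain s h where p: "step_pair d n S t = (s, h)" by (cases "step_pair d n S t")
    have "row_le (chain_elem S t) (chain_elem S (t' - 1))"
      using chain_elem_mono[OF S] t \<open>t \<noteq> t'\<close> by simp
    then have "chain_elem S t ! (h - 1) \<le> chain_elem S (t' - 1) ! (h - 1)"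
      using step_pairD(1,2)[OF S t(1) p] chain_elem_Irows[OF S, of t] t(1)
      by (simp add: row_le_def Irows_length)
    then show False using step_pairD(3)[OF S t(2)] step_pairD(4)[OF S t(1) p] p eq by simp
  qed
  have inj: "inj_on (step_pair d n S) {1..d * (n - d)}"
  proof (rule inj_onI)
    fix t t' assume "t \<in> {1..d * (n - d)}" "t' \<in> {1..d * (n - d)}"
      "step_pair d n S t = step_pair d n S t'"
    then show "t = t'" using le_imp_eq[of t t'] le_imp_eq[of t' t] by (cases "t \<le> t'") auto
  qed
  have "step_pair d n S ` {1..d * (n - d)} \<subseteq> adm_pairs d n"
    using step_pair_adm_pairs[OF S] by auto
  moreover have "card (step_pair d n S ` {1..d * (n - d)}) = card (adm_pairs d n)"
    using card_image[OF inj] card_adm_pairs by simp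
  ultimately show ?thesis
    using inj card_subset_eq[OF finite_adm_pairs] by (simp add: bij_betw_def)
qed

lemma max_chain_eq_if_step_pair_eq:
  assumes S1: "S1 \<in> Cset d n" and S2: "S2 \<in> Cset d n"
    and eq: "\<And>t. t \<in> {1..d * (n - d)} \<Longrightarrow> step_pair d n S1 t = step_pair d n S2 t"
  shows "S1 = S2"
proof -
  have "chain_elem S1 t = chain_elem S2 t" if "t \<le> d * (n - d)" for t
    using that
  proof (induction t)
    case 0
    then show ?case using op_path_chain_elem[OF S1] op_path_chain_elem[OF S2]
      by (simp add: op_path_def)
  next
    case (Suc t)
    then have t: "Suc t \<in> {1..d * (n - d)}" by simp
    obtain s h where p: "step_pair d n S1 (Suc t) = (s, h)" by (cases "step_pair d n S1 (Suc t)")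
    then show ?case
      using step_pairD(6)[OF S1 t p] step_pairD(6)[OF S2 t] eq[OF t] Suc by simp
  qed
  then show ?thesis using max_chain_eq_image[OF S1] max_chain_eq_image[OF S2] by auto
qed

end

definition lin_ext :: "nat \<Rightarrow> nat \<Rightarrow> (nat \<times> nat \<Rightarrow> nat) \<Rightarrow> bool" where
  "lin_ext d n lam \<longleftrightarrow> bij_betw lam (adm_pairs d n) {1..d * (n - d)} \<and>
     (\<forall>a\<in>adm_pairs d n. \<forall>b\<in>adm_pairs d n. adm_less a b \<longrightarrow> lam a < lam b)"

text \<open>Applying the operators in the order prescribed by a linear extension \<open>lam\<close>, the
  entry \<open>i\<^sub>h\<close> after \<open>t\<close> steps has been raised once by each \<open>f\<^sub>s\<^sub>,\<^sub>h\<close> with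
  \<open>lam (s, h) \<le> t\<close>.\<close>

definition ext_count :: "nat \<Rightarrow> nat \<Rightarrow> (nat \<times> nat \<Rightarrow> nat) \<Rightarrow> nat \<Rightarrow> nat \<Rightarrow> nat" where
  "ext_count d n lam h t = card {s. (s, h) \<in> adm_pairs d n \<and> lam (s, h) \<le> t}"

definition ext_row :: "nat \<Rightarrow> nat \<Rightarrow> (nat \<times> nat \<Rightarrow> nat) \<Rightarrow> nat \<Rightarrow> row" where
  "ext_row d n lam t = map (\<lambda>k. Suc k + ext_count d n lam (Suc k) t) [0..<d]"

lemma length_ext_row: "length (ext_row d n lam t) = d"
  by (simp add: ext_row_def)

lemma ext_row_nth: "k < d \<Longrightarrow> ext_row d n lam t ! k = Suc k + ext_count d n lam (Suc k) t"
  by (simp add: ext_row_def)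

definition ext_chain :: "nat \<Rightarrow> nat \<Rightarrow> (nat \<times> nat \<Rightarrow> nat) \<Rightarrow> row set" where
  "ext_chain d n lam = ext_row d n lam ` {0..d * (n - d)}"

context grassmann_poset
begin

context
  fixes lam
  assumes lam: "lin_ext d n lam"
begin

lemma lin_ext_range: "a \<in> adm_pairs d n \<Longrightarrow> lam a \<in> {1..d * (n - d)}"
  using lam by (auto simp: lin_ext_def bij_betw_def)

lemma lin_ext_inv_into:
  assumes "t \<in> {1..d * (n - d)}"
  shows "inv_into (adm_pairs d n) lam t \<in> adm_pairs d n" "lam (inv_into (adm_pairs d n) lam t) = t"
  using assms lam by (auto simp: lin_ext_def bij_betw_def intro: inv_into_into f_inv_into_f)

lemma lin_ext_less_iff:
  assumes "(s, h) \<in> adm_pairs d n" "(s', h) \<in> adm_pairs d n"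
  shows "lam (s', h) < lam (s, h) \<longleftrightarrow> s' < s"
proof -
  have "adm_less (s', h) (s, h)" if "s' < s" for s s'
    using that by (simp add: adm_less_def)
  moreover have "inj_on lam (adm_pairs d n)" using lam by (simp add: lin_ext_def bij_betw_def)
  ultimately show ?thesis
    using assms lam unfolding lin_ext_def by (metis inj_on_contraD less_asym' linorder_neqE_nat)
qed

lemma ext_count_0: "ext_count d n lam h 0 = 0"
proof -
  have "{s. (s, h) \<in> adm_pairs d n \<and> lam (s, h) \<le> 0} = {}" using lin_ext_range by fastforce
  then show ?thesis unfolding ext_count_def by (metis card.empty)
qed

lemma ext_count_before:
  assumes a: "(s, h) \<in> adm_pairs d n"
  shows "ext_count d n lam h (lam (s, h) - 1) = s - h"
proof -
  have "{s'. (s', h) \<in> adm_pairs d n \<and> lam (s', h) \<le> lam (s, h) - 1} = {h..<s}"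
  proof -
    have "(s', h) \<in> adm_pairs d n" if "h \<le> s'" "s' < s" for s'
      using a that by (auto simp: mem_adm_pairs_iff)
    moreover have "h \<le> s'" if "(s', h) \<in> adm_pairs d n" for s'
      using that by (simp add: mem_adm_pairs_iff)
    moreover have "lam (s', h) \<le> lam (s, h) - 1 \<longleftrightarrow> s' < s" if "(s', h) \<in> adm_pairs d n" for s'
      using lin_ext_less_iff[OF a that] lin_ext_range[OF a] by auto
    ultimately show ?thesis by auto
  qed
  then show ?thesis by (simp add: ext_count_def)
qed

lemma ext_count_next:
  assumes a: "(s, h) \<in> adm_pairs d n" and "h < d"
  shows "s - h + 1 \<le> ext_count d n lam (h + 1) (lam (s, h) - 1)"
proof -
  have sh: "1 \<le> h" "h \<le> s" "s < n - d + h" using a by (auto simp: mem_adm_pairs_iff)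
  have "{h + 1..s + 1} \<subseteq> {s'. (s', h + 1) \<in> adm_pairs d n \<and> lam (s', h + 1) \<le> lam (s, h) - 1}"
  proof
    fix s' assume s': "s' \<in> {h + 1..s + 1}"
    then have a': "(s', h + 1) \<in> adm_pairs d n" using sh \<open>h < d\<close> by (simp add: mem_adm_pairs_iff)
    have "adm_less (s', h + 1) (s, h)" using s' by (simp add: adm_less_def)
    then have "lam (s', h + 1) < lam (s, h)" using lam a a' by (simp add: lin_ext_def)
    then show "s' \<in> {s'. (s', h + 1) \<in> adm_pairs d n \<and> lam (s', h + 1) \<le> lam (s, h) - 1}"
      using a' by simp
  qed
  then have "card {h + 1..s + 1} \<le> ext_count d n lam (h + 1) (lam (s, h) - 1)"
    unfolding ext_count_def by (rule card_mono[OF finite_adm_row])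
  then show ?thesis using sh by simp
qed

lemma ext_count_step:
  assumes a: "(s, h) \<in> adm_pairs d n"
  shows "ext_count d n lam k (lam (s, h)) =
    ext_count d n lam k (lam (s, h) - 1) + (if k = h then 1 else 0)"
proof -
  have inj: "inj_on lam (adm_pairs d n)" using lam by (simp add: lin_ext_def bij_betw_def)
  have "lam (s', k) \<le> lam (s, h) \<longleftrightarrow> lam (s', k) \<le> lam (s, h) - 1 \<or> (s', k) = (s, h)"
    if "(s', k) \<in> adm_pairs d n" for s'
    using inj_onD[OF inj _ that a] lin_ext_range[OF a] by auto
  then have "{s'. (s', k) \<in> adm_pairs d n \<and> lam (s', k) \<le> lam (s, h)} =
      {s'. (s', k) \<in> adm_pairs d n \<and> lam (s', k) \<le> lam (s, h) - 1} \<union> (if k = h then {s} else {})"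
    using a by auto
  moreover have "s \<notin> {s'. (s', h) \<in> adm_pairs d n \<and> lam (s', h) \<le> lam (s, h) - 1}"
    using lin_ext_range[OF a] by auto
  ultimately show ?thesis using finite_adm_row by (simp add: ext_count_def)
qed

lemma ext_row_0: "ext_row d n lam 0 = row_min d"
  by (simp add: ext_row_def row_min_def ext_count_0)

lemma root_op_ext_row:
  assumes a: "(s, h) \<in> adm_pairs d n"
  shows "root_op s h (ext_row d n lam (lam (s, h) - 1)) = Some (ext_row d n lam (lam (s, h)))"
proof -
  have sh: "1 \<le> h" "h \<le> d" "h \<le> s" using a by (auto simp: mem_adm_pairs_iff)
  let ?x = "ext_row d n lam (lam (s, h) - 1)"
  have "?x ! (h - 1) = s" using ext_row_nth[of "h - 1"] ext_count_before[OF a] sh by simp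
  moreover have "h = length ?x \<or> s + 2 \<le> ?x ! h"
    using ext_row_nth[of h] ext_count_next[OF a] sh by (cases "h < d") (auto simp: length_ext_row)
  moreover have "ext_row d n lam (lam (s, h)) = ?x[h - 1 := s + 1]"
  proof (rule nth_equalityI)
    fix k assume "k < length (ext_row d n lam (lam (s, h)))"
    then have "k < d" by (simp add: length_ext_row)
    then show "ext_row d n lam (lam (s, h)) ! k = ?x[h - 1 := s + 1] ! k"
      using ext_row_nth ext_count_step[OF a, of "Suc k"] \<open>?x ! (h - 1) = s\<close> sh
      by (cases "k = h - 1") (auto simp: length_ext_row)
  qed (simp add: length_ext_row)
  ultimately show ?thesis using sh by (auto simp: root_op_eq_Some_iff length_ext_row)
qed

lemma op_path_ext_row: "op_path d n (ext_row d n lam)"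
proof -
  have step: "\<exists>a\<in>adm_pairs d n.
      root_op (fst a) (snd a) (ext_row d n lam t) = Some (ext_row d n lam (Suc t))"
    if "t < d * (n - d)" for t
  proof -
    let ?a = "inv_into (adm_pairs d n) lam (Suc t)"
    have "?a \<in> adm_pairs d n" "lam ?a = Suc t" using lin_ext_inv_into that by auto
    then show ?thesis using root_op_ext_row[of "fst ?a" "snd ?a"] by auto
  qed
  have "ext_row d n lam t \<in> Irows d n" if "t \<le> d * (n - d)" for t
    using that
  proof (induction t)
    case (Suc t)
    then obtain a where "a \<in> adm_pairs d n"
      "root_op (fst a) (snd a) (ext_row d n lam t) = Some (ext_row d n lam (Suc t))"
      using step[of t] by auto
    then show ?case
      using root_op_Irows Suc by (cases a) (auto simp: mem_adm_pairs_iff)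
  qed (simp add: ext_row_0 row_min_Irows[OF d_le_n])
  then show ?thesis using step ext_row_0 unfolding op_path_def by blast
qed

lemma ext_chain_Cset: "ext_chain d n lam \<in> Cset d n"
  unfolding ext_chain_def by (rule op_path_image_Cset[OF op_path_ext_row])

lemma chain_elem_ext_chain: "t \<le> d * (n - d) \<Longrightarrow> chain_elem (ext_chain d n lam) t = ext_row d n lam t"
  unfolding ext_chain_def by (rule chain_elem_op_path_image[OF op_path_ext_row])

lemma step_pair_ext_chain:
  assumes t: "t \<in> {1..d * (n - d)}"
  shows "step_pair d n (ext_chain d n lam) t = inv_into (adm_pairs d n) lam t"
proof -
  let ?a = "inv_into (adm_pairs d n) lam t"
  have "?a \<in> adm_pairs d n" "lam ?a = t" using lin_ext_inv_into[OF t] by auto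
  then have "root_op (fst ?a) (snd ?a) (chain_elem (ext_chain d n lam) (t - 1)) =
      Some (chain_elem (ext_chain d n lam) t)"
    using root_op_ext_row[of "fst ?a" "snd ?a"] chain_elem_ext_chain t by auto
  then show ?thesis using step_pair_eq_iff[OF ext_chain_Cset t] by (metis prod.collapse)
qed

end

end

text \<open>The rectangle of admissible pairs read row by row (decreasing \<open>h\<close>, then increasing \<open>s\<close>)
  and column by column (increasing \<open>s - h\<close>, then decreasing \<open>h\<close>). These are the orders in
  which \<open>C\<^sub>r\<^sub>i\<^sub>g\<^sub>h\<^sub>t\<close> and \<open>C\<^sub>l\<^sub>e\<^sub>f\<^sub>t\<close> use the operators.\<close>

definition ext_right :: "nat \<Rightarrow> nat \<Rightarrow> nat \<times> nat \<Rightarrow> nat" where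
  "ext_right d n a = (d - snd a) * (n - d) + (fst a - snd a) + 1"

definition ext_left :: "nat \<Rightarrow> nat \<Rightarrow> nat \<times> nat \<Rightarrow> nat" where
  "ext_left d n a = (fst a - snd a) * d + (d - snd a) + 1"

lemma mult_add_less_mult: "(i::nat) < j \<Longrightarrow> x < m \<Longrightarrow> i * m + x < j * m"
proof -
  assume "i < j" "x < m"
  then have "(i + 1) * m \<le> j * m" by (intro mult_le_mono1) simp
  then show "i * m + x < j * m" using \<open>x < m\<close> by simp
qed

lemma ext_right_less:
  assumes "(s, h) \<in> adm_pairs d n" "(s', h') \<in> adm_pairs d n" "h' < h"
  shows "ext_right d n (s, h) < ext_right d n (s', h')"
proof -
  have "(d - h) * (n - d) + (s - h) < (d - h') * (n - d)"
    using assms by (intro mult_add_less_mult) (auto simp: mem_adm_pairs_iff)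
  then show ?thesis by (simp add: ext_right_def)
qed

lemma ext_left_less:
  assumes "(s, h) \<in> adm_pairs d n" "(s', h') \<in> adm_pairs d n" "s - h < s' - h'"
  shows "ext_left d n (s, h) < ext_left d n (s', h')"
proof -
  have "(s - h) * d + (d - h) < (s' - h') * d"
    using assms by (intro mult_add_less_mult) (auto simp: mem_adm_pairs_iff)
  then show ?thesis by (simp add: ext_left_def)
qed

lemma bij_betw_adm_pairs_if_inj_on:
  assumes "inj_on f (adm_pairs d n)" "\<And>a. a \<in> adm_pairs d n \<Longrightarrow> f a \<in> {1..d * (n - d)}"
  shows "bij_betw f (adm_pairs d n) {1..d * (n - d)}"
proof -
  have "f ` adm_pairs d n \<subseteq> {1..d * (n - d)}" using assms(2) by auto
  moreover have "card (f ` adm_pairs d n) = card {1..d * (n - d)}"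
    using card_image[OF assms(1)] card_adm_pairs by simp
  ultimately have "f ` adm_pairs d n = {1..d * (n - d)}"
    by (rule card_subset_eq[OF finite_atLeastAtMost])
  then show ?thesis using assms(1) by (simp add: bij_betw_def)
qed

lemma lin_ext_ext_right: "lin_ext d n (ext_right d n)"
  unfolding lin_ext_def
proof (intro conjI ballI impI)
  have "a = b" if ab: "(s, h) = a" "(s', h') = b" "a \<in> adm_pairs d n" "b \<in> adm_pairs d n"
    and eq: "ext_right d n a = ext_right d n b" for a b s h s' h'
  proof -
    have "h = h'" using ext_right_less[of s h d n s' h'] ext_right_less[of s' h' d n s h] ab eq
      by (metis less_irrefl nat_neq_iff)
    then show ?thesis using eq ab by (auto simp: ext_right_def mem_adm_pairs_iff)
  qed
  then have "inj_on (ext_right d n) (adm_pairs d n)" by (intro inj_onI) (metis surj_pair)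
  moreover have "ext_right d n a \<in> {1..d * (n - d)}" if "a \<in> adm_pairs d n" for a
  proof -
    obtain s h where a: "a = (s, h)" by (cases a)
    have "(d - h) * (n - d) + (s - h) < d * (n - d)"
      using that a by (intro mult_add_less_mult) (auto simp: mem_adm_pairs_iff)
    then show ?thesis using a by (simp add: ext_right_def)
  qed
  ultimately show "bij_betw (ext_right d n) (adm_pairs d n) {1..d * (n - d)}"
    by (rule bij_betw_adm_pairs_if_inj_on)
next
  fix a b assume a: "a \<in> adm_pairs d n" and b: "b \<in> adm_pairs d n" and less: "adm_less a b"
  obtain s h s' h' where ab: "a = (s, h)" "b = (s', h')" by (cases a, cases b)
  show "ext_right d n a < ext_right d n b"
  proof (cases "h' < h")
    case False
    then have "h = h'" "s < s'" using less ab by (auto simp: adm_less_def)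
    then show ?thesis using ab a by (auto simp: ext_right_def mem_adm_pairs_iff)
  qed (use ext_right_less a b ab in blast)
qed

lemma lin_ext_ext_left: "lin_ext d n (ext_left d n)"
  unfolding lin_ext_def
proof (intro conjI ballI impI)
  have "a = b" if ab: "(s, h) = a" "(s', h') = b" "a \<in> adm_pairs d n" "b \<in> adm_pairs d n"
    and eq: "ext_left d n a = ext_left d n b" for a b s h s' h'
  proof -
    have "s - h = s' - h'"
      using ext_left_less[of s h d n s' h'] ext_left_less[of s' h' d n s h] ab eq
      by (metis less_irrefl nat_neq_iff)
    moreover then have "d - h = d - h'" using eq unfolding ab(1,2)[symmetric]
      by (simp add: ext_left_def)
    ultimately show ?thesis using ab by (auto simp: mem_adm_pairs_iff)
  qed
  then have "inj_on (ext_left d n) (adm_pairs d n)" by (intro inj_onI) (metis surj_pair)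
  moreover have "ext_left d n a \<in> {1..d * (n - d)}" if "a \<in> adm_pairs d n" for a
  proof -
    obtain s h where a: "a = (s, h)" by (cases a)
    have "(s - h) * d + (d - h) < (n - d) * d"
      using that a by (intro mult_add_less_mult) (auto simp: mem_adm_pairs_iff)
    then show ?thesis using a by (simp add: ext_left_def mult.commute)
  qed
  ultimately show "bij_betw (ext_left d n) (adm_pairs d n) {1..d * (n - d)}"
    by (rule bij_betw_adm_pairs_if_inj_on)
next
  fix a b assume a: "a \<in> adm_pairs d n" and b: "b \<in> adm_pairs d n" and less: "adm_less a b"
  obtain s h s' h' where ab: "a = (s, h)" "b = (s', h')" by (cases a, cases b)
  have "h \<le> s" "h' \<le> s'" using a b ab by (auto simp: mem_adm_pairs_iff)
  show "ext_left d n a < ext_left d n b"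
  proof (cases "s - h < s' - h'")
    case False
    then have "s - h = s' - h'" "h' < h" using less ab \<open>h \<le> s\<close> \<open>h' \<le> s'\<close>
      by (auto simp: adm_less_def)
    then show ?thesis using ab a b by (auto simp: ext_left_def mem_adm_pairs_iff)
  qed (use ext_left_less a b ab in blast)
qed

lemma adm_less_iff_ext_right_ext_left:
  assumes a: "a \<in> adm_pairs d n" and b: "b \<in> adm_pairs d n"
  shows "adm_less a b \<longleftrightarrow> ext_right d n a < ext_right d n b \<and> ext_left d n a < ext_left d n b"
proof
  assume "ext_right d n a < ext_right d n b \<and> ext_left d n a < ext_left d n b"
  moreover obtain s h s' h' where ab: "a = (s, h)" "b = (s', h')" by (cases a, cases b)
  ultimately have "\<not> h < h'" "\<not> s' - h' < s - h" "a \<noteq> b"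
    using ext_right_less[of s' h' d n s h] ext_left_less[of s' h' d n s h] a b by auto
  moreover have "h \<le> s" "h' \<le> s'" using a b ab by (auto simp: mem_adm_pairs_iff)
  ultimately show "adm_less a b" using ab by (auto simp: adm_less_def)
qed (use a b lin_ext_ext_right lin_ext_ext_left in \<open>auto simp: lin_ext_def\<close>)

abbreviation chain_right :: "nat \<Rightarrow> nat \<Rightarrow> row set" where
  "chain_right d n \<equiv> ext_chain d n (ext_right d n)"

abbreviation chain_left :: "nat \<Rightarrow> nat \<Rightarrow> row set" where
  "chain_left d n \<equiv> ext_chain d n (ext_left d n)"

lemma ext_row_ext_right_nth:
  assumes a: "(s, h) \<in> adm_pairs d n" and k: "1 \<le> k" "k < h"
  shows "ext_row d n (ext_right d n) (ext_right d n (s, h)) ! (k - 1) = k"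
proof -
  have "{s'. (s', k) \<in> adm_pairs d n \<and> ext_right d n (s', k) \<le> ext_right d n (s, h)} = {}"
    using ext_right_less[OF a _ k(2)] by force
  then have "ext_count d n (ext_right d n) k (ext_right d n (s, h)) = 0"
    unfolding ext_count_def by (metis card.empty)
  moreover have "k - 1 < d" "Suc (k - 1) = k" using k a by (auto simp: mem_adm_pairs_iff)
  ultimately show ?thesis using ext_row_nth[of "k - 1"] by simp
qed

lemma ext_row_ext_left_nth:
  assumes a: "(s, h) \<in> adm_pairs d n" and k: "h \<le> k" "k \<le> d"
  shows "ext_row d n (ext_left d n) (ext_left d n (s, h)) ! (k - 1) = k + (s - h + 1)"
proof -
  have sh: "1 \<le> h" "h \<le> s" "s < n - d + h" using a by (auto simp: mem_adm_pairs_iff)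
  have "{s'. (s', k) \<in> adm_pairs d n \<and> ext_left d n (s', k) \<le> ext_left d n (s, h)} =
      {k..k + (s - h)}"
  proof (intro equalityI subsetI)
    fix s' assume "s' \<in> {s'. (s', k) \<in> adm_pairs d n \<and> ext_left d n (s', k) \<le> ext_left d n (s, h)}"
    then have b: "(s', k) \<in> adm_pairs d n" "ext_left d n (s', k) \<le> ext_left d n (s, h)" by auto
    then have "\<not> s - h < s' - k" using ext_left_less[OF a b(1)] by auto
    then show "s' \<in> {k..k + (s - h)}" using b by (auto simp: mem_adm_pairs_iff)
  next
    fix s' assume s': "s' \<in> {k..k + (s - h)}"
    then have b: "(s', k) \<in> adm_pairs d n" using sh k by (auto simp: mem_adm_pairs_iff)
    have "ext_left d n (s', k) \<le> ext_left d n (s, h)"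
    proof (cases "s' - k < s - h")
      case False
      then have "s' - k = s - h" using s' by auto
      then show ?thesis using k by (simp add: ext_left_def)
    qed (use ext_left_less[OF b a] in simp)
    then show "s' \<in> {s'. (s', k) \<in> adm_pairs d n \<and> ext_left d n (s', k) \<le> ext_left d n (s, h)}"
      using b by simp
  qed
  moreover have "k - 1 < d" "Suc (k - 1) = k" using k sh by auto
  ultimately show ?thesis using ext_row_nth[of "k - 1"] sh k by (simp add: ext_count_def)
qed

lemma lexord_of_nth:
  assumes "length xs = length ys" "i < length xs" "\<forall>j<i. xs!j = ys!j" "(xs!i, ys!i) \<in> r"
  shows "(xs, ys) \<in> lexord r"
proof -
  have "take i xs = take i ys" using assms by (intro nth_take_lemma) auto
  then show ?thesis unfolding lexord_take_index_conv using assms by auto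
qed

lemma the_strict_extremum_eq:
  assumes "C \<in> A" "\<And>C'. C' \<in> A \<Longrightarrow> C' \<noteq> C \<Longrightarrow> R C C'" "\<And>x. \<not> R x x" "transp R"
  shows "(THE C. C \<in> A \<and> (\<forall>C'\<in>A. C' \<noteq> C \<longrightarrow> R C C')) = C"
proof (rule the_equality)
  fix D assume D: "D \<in> A \<and> (\<forall>C'\<in>A. C' \<noteq> D \<longrightarrow> R D C')"
  show "D = C"
  proof (rule ccontr)
    assume "D \<noteq> C"
    then have "R D C" "R C D" using D assms(1,2) by auto
    then show False using assms(3) transpD[OF assms(4)] by blast
  qed
qed (use assms in blast)

lemma transp_lex_less_chain_word: "transp (\<lambda>C C'. lex_less (chain_word d n C) (chain_word d n C'))"
  unfolding lex_less_def by (rule transpI) (erule lexord_trans, auto simp: trans_def)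

lemma lex_less_irrefl: "\<not> lex_less xs xs"
  unfolding lex_less_def by (simp add: lexord_irreflexive)

context grassmann_poset
begin

lemma chain_elem_top: "S \<in> Cset d n \<Longrightarrow> chain_elem S (d * (n - d)) = row_max d n"
  using max_chain_row_len_inj chain_elem_mem row_max_mem_max_chain row_len_row_max by simp

lemma last_difference:
  assumes S1: "S1 \<in> Cset d n" and S2: "S2 \<in> Cset d n" and ne: "S1 \<noteq> S2"
  obtains T where "T < d * (n - d)" "chain_elem S1 T \<noteq> chain_elem S2 T"
    "\<And>t. T < t \<Longrightarrow> t \<le> d * (n - d) \<Longrightarrow> chain_elem S1 t = chain_elem S2 t"
proof -
  let ?D = "{t. t \<le> d * (n - d) \<and> chain_elem S1 t \<noteq> chain_elem S2 t}"
  have "?D \<noteq> {}"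
    using max_chain_eq_image[OF S1] max_chain_eq_image[OF S2] ne by (auto intro!: image_cong)
  then have D: "Max ?D \<in> ?D" and above: "\<And>t. t \<in> ?D \<Longrightarrow> t \<le> Max ?D"
    by (simp_all del: mem_Collect_eq)
  then have "Max ?D \<noteq> d * (n - d)" using chain_elem_top[OF S1] chain_elem_top[OF S2] by auto
  then have "Max ?D < d * (n - d)" using D by simp
  moreover have "chain_elem S1 t = chain_elem S2 t" if "Max ?D < t" "t \<le> d * (n - d)" for t
  proof (rule ccontr)
    assume "chain_elem S1 t \<noteq> chain_elem S2 t"
    then have "t \<in> ?D" using that(2) by simp
    then show False using above that(1) by (meson leD)
  qed
  ultimately show ?thesis using that D by blast
qed

lemma last_difference_steps:
  assumes S1: "S1 \<in> Cset d n" and S2: "S2 \<in> Cset d n" and T: "Suc T \<in> {1..d * (n - d)}"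
    and top: "chain_elem S1 (Suc T) = chain_elem S2 (Suc T)"
    and ne: "chain_elem S1 T \<noteq> chain_elem S2 T"
    and p1: "step_pair d n S1 (Suc T) = (s, h)" and p2: "step_pair d n S2 (Suc T) = (s', k)"
  shows "h \<noteq> k" "h < k \<Longrightarrow> (chain_elem S1 T, chain_elem S2 T) \<in> lexord {(x, y). x < y}"
proof -
  let ?x = "chain_elem S1" and ?y = "chain_elem S2"
  note X = step_pairD[OF S1 T p1, simplified] and Y = step_pairD[OF S2 T p2, simplified]
  have "T \<le> d * (n - d)" using T by auto
  then have len: "length (?x T) = d" "length (?y T) = d"
    using Irows_length chain_elem_Irows[OF S1] chain_elem_Irows[OF S2] by blast+
  show "h \<noteq> k"
  proof
    assume "h = k"
    then have "s = s'" using X(4) Y(4) top by simp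
    have "(?x T)[h - 1 := s] = ?x T" "(?y T)[k - 1 := s'] = ?y T"
      using list_update_id[of "?x T" "h - 1"] list_update_id[of "?y T" "k - 1"] X(3) Y(3)
      by simp_all
    then have "?x T = (?x (Suc T))[h - 1 := s]" "?y T = (?y (Suc T))[k - 1 := s']"
      using X(6) Y(6) by simp_all
    then show False using ne top \<open>h = k\<close> \<open>s = s'\<close> by simp
  qed
  assume "h < k"
  show "(?x T, ?y T) \<in> lexord {(x, y). x < y}"
  proof (rule lexord_of_nth)
    show "\<forall>j<h - 1. ?x T ! j = ?y T ! j"
    proof (intro allI impI)
      fix j assume "j < h - 1"
      then have "?x (Suc T) ! j = ?x T ! j" "?y (Suc T) ! j = ?y T ! j"
        using X(6) Y(6) \<open>h < k\<close> by auto
      then show "?x T ! j = ?y T ! j" using top by simp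
    qed
    have "?y (Suc T) ! (h - 1) = ?y T ! (h - 1)" using Y(6) \<open>h < k\<close> X(1) by simp
    then show "(?x T ! (h - 1), ?y T ! (h - 1)) \<in> {(x, y). x < y}" using X(3,4) top by simp
  qed (use len X(1,2) in auto)
qed

lemma chain_word_lex_less:
  assumes S1: "S1 \<in> Cset d n" and S2: "S2 \<in> Cset d n" and T: "T < d * (n - d)"
    and eq: "\<And>t. T < t \<Longrightarrow> t \<le> d * (n - d) \<Longrightarrow> chain_elem S1 t = chain_elem S2 t"
    and less: "(chain_elem S1 T, chain_elem S2 T) \<in> lexord {(x, y). x < y}"
  shows "lex_less (chain_word d n S1) (chain_word d n S2)"
proof -
  let ?r = "d * (n - d)"
  have "[0..<Suc ?r] = [0..<T] @ [T..<T + (Suc ?r - T)]"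
    using upt_add_eq_append[of 0 T "Suc ?r - T"] T by simp
  also have "[T..<T + (Suc ?r - T)] = T # [Suc T..<Suc ?r]" using T by (simp add: upt_conv_Cons)
  finally have split: "rev [0..<?r + 1] = rev [Suc T..<Suc ?r] @ T # rev [0..<T]" by simp
  have above:
    "map (chain_elem S1) (rev [Suc T..<Suc ?r]) = map (chain_elem S2) (rev [Suc T..<Suc ?r])"
    by (intro map_cong) (auto intro!: eq)
  have "length (chain_elem S2 T) \<le> length (chain_elem S1 T)"
    using chain_elem_Irows[OF S1, of T] chain_elem_Irows[OF S2, of T] T by (simp add: Irows_length)
  then show ?thesis
    unfolding lex_less_def chain_word_def split map_append concat_append above list.map concat.simps
    by (intro lexord_append_leftI lexord_sufI[OF less])
qed

text \<open>Read from the top, \<open>C\<^sub>r\<^sub>i\<^sub>g\<^sub>h\<^sub>t\<close> always lowers the leftmost entry that can be lowered: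
  after \<open>f\<^sub>s\<^sub>,\<^sub>h\<close> the entries left of position \<open>h\<close> are still minimal.\<close>

lemma chain_right_lex_least:
  assumes S: "S \<in> Cset d n" and ne: "S \<noteq> chain_right d n"
  shows "lex_less (chain_word d n (chain_right d n)) (chain_word d n S)"
proof -
  note CR = ext_chain_Cset[OF lin_ext_ext_right] chain_elem_ext_chain[OF lin_ext_ext_right]
    step_pair_ext_chain[OF lin_ext_ext_right]
  obtain T where T: "T < d * (n - d)" "chain_elem (chain_right d n) T \<noteq> chain_elem S T"
    "\<And>t. T < t \<Longrightarrow> t \<le> d * (n - d) \<Longrightarrow> chain_elem (chain_right d n) t = chain_elem S t"
    using last_difference[OF CR(1) S] ne by blast
  have top: "chain_elem (chain_right d n) (Suc T) = chain_elem S (Suc T)" using T by simp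
  have t: "Suc T \<in> {1..d * (n - d)}" using T by simp
  obtain s h where p: "step_pair d n (chain_right d n) (Suc T) = (s, h)"
    by (cases "step_pair d n (chain_right d n) (Suc T)")
  obtain s' k where p': "step_pair d n S (Suc T) = (s', k)" by (cases "step_pair d n S (Suc T)")
  have a: "(s, h) \<in> adm_pairs d n" "ext_right d n (s, h) = Suc T"
    using lin_ext_inv_into[OF lin_ext_ext_right t] CR(3)[OF t] p by auto
  note steps = last_difference_steps[OF CR(1) S t top T(2) p p']
  have "\<not> k < h"
  proof
    assume "k < h"
    have "chain_elem S (Suc T) ! (k - 1) = k"
      using ext_row_ext_right_nth[OF a(1) _ \<open>k < h\<close>] step_pairD(1)[OF S t p'] CR(2) T(1) top a(2)
      by simp
    moreover have "k < chain_elem S (Suc T) ! (k - 1)"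
      using root_op_target_nth(1)[OF chain_elem_Irows[OF S]
          step_pair_eq_iff[OF S t, THEN iffD1, OF p']]
        T(1) by simp
    ultimately show False by simp
  qed
  then have "(chain_elem (chain_right d n) T, chain_elem S T) \<in> lexord {(x, y). x < y}"
    using steps by simp
  then show ?thesis using chain_word_lex_less[OF CR(1) S T(1) T(3)] by simp
qed

text \<open>Read from the top, \<open>C\<^sub>l\<^sub>e\<^sub>f\<^sub>t\<close> lowers the rightmost entry that can be lowered:
  after \<open>f\<^sub>s\<^sub>,\<^sub>h\<close> the entries from position \<open>h\<close> on are consecutive integers.\<close>

lemma chain_left_lex_greatest:
  assumes S: "S \<in> Cset d n" and ne: "S \<noteq> chain_left d n"
  shows "lex_less (chain_word d n S) (chain_word d n (chain_left d n))"
proof -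
  note CL = ext_chain_Cset[OF lin_ext_ext_left] chain_elem_ext_chain[OF lin_ext_ext_left]
    step_pair_ext_chain[OF lin_ext_ext_left]
  obtain T where T: "T < d * (n - d)" "chain_elem S T \<noteq> chain_elem (chain_left d n) T"
    "\<And>t. T < t \<Longrightarrow> t \<le> d * (n - d) \<Longrightarrow> chain_elem S t = chain_elem (chain_left d n) t"
    using last_difference[OF S CL(1)] ne by blast
  have top: "chain_elem S (Suc T) = chain_elem (chain_left d n) (Suc T)" using T by simp
  have t: "Suc T \<in> {1..d * (n - d)}" using T by simp
  obtain s h where p: "step_pair d n (chain_left d n) (Suc T) = (s, h)"
    by (cases "step_pair d n (chain_left d n) (Suc T)")
  obtain s' k where p': "step_pair d n S (Suc T) = (s', k)" by (cases "step_pair d n S (Suc T)")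
  have a: "(s, h) \<in> adm_pairs d n" "ext_left d n (s, h) = Suc T"
    using lin_ext_inv_into[OF lin_ext_ext_left t] CL(3)[OF t] p by auto
  note steps = last_difference_steps[OF S CL(1) t top T(2) p' p]
  have "\<not> h < k"
  proof
    assume "h < k"
    have "k \<le> d" using step_pairD(2)[OF S t p'] .
    have "1 < k" using \<open>h < k\<close> a(1) by (auto simp: mem_adm_pairs_iff)
    have "h \<le> k - 1" "k - 1 \<le> d" using \<open>h < k\<close> \<open>k \<le> d\<close> by auto
    then have "chain_elem S (Suc T) ! (k - 2) + 1 = chain_elem S (Suc T) ! (k - 1)"
      using ext_row_ext_left_nth[OF a(1) _ \<open>k \<le> d\<close>]
        ext_row_ext_left_nth[OF a(1) \<open>h \<le> k - 1\<close> \<open>k - 1 \<le> d\<close>]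
        \<open>h < k\<close> CL(2) T(1) top a(2) by (simp add: numeral_2_eq_2)
    moreover have "chain_elem S (Suc T) ! (k - 2) + 1 < chain_elem S (Suc T) ! (k - 1)"
      using root_op_target_nth(2)[OF chain_elem_Irows[OF S]
          step_pair_eq_iff[OF S t, THEN iffD1, OF p']]
        T(1) \<open>1 < k\<close> by simp
    ultimately show False by simp
  qed
  then have "(chain_elem S T, chain_elem (chain_left d n) T) \<in> lexord {(x, y). x < y}"
    using steps by simp
  then show ?thesis using chain_word_lex_less[OF S CL(1) T(1) T(3)] by simp
qed

lemma C_right_eq: "C_right d n = chain_right d n"
  unfolding C_right_def
  by (rule the_strict_extremum_eq[OF ext_chain_Cset[OF lin_ext_ext_right]])
    (use chain_right_lex_least lex_less_irrefl transp_lex_less_chain_word in auto)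

lemma C_left_eq: "C_left d n = chain_left d n"
  unfolding C_left_def
  by (rule the_strict_extremum_eq[where
        R = "\<lambda>C C'. lex_less (chain_word d n C') (chain_word d n C)",
        OF ext_chain_Cset[OF lin_ext_ext_left]])
    (use chain_left_lex_greatest lex_less_irrefl transp_lex_less_chain_word in
      \<open>auto simp: transp_def\<close>)

end

section \<open>The permutation of a chain\<close>

definition op_time :: "nat \<Rightarrow> nat \<Rightarrow> row set \<Rightarrow> nat \<times> nat \<Rightarrow> nat" where
  "op_time d n S a = inv_into {1..d * (n - d)} (step_pair d n S) a"

context grassmann_poset
begin

lemma op_time_range:
  assumes "S \<in> Cset d n" "a \<in> adm_pairs d n"
  shows "op_time d n S a \<in> {1..d * (n - d)}"
  unfolding op_time_def
  by (rule inv_into_into) (use bij_betw_step_pair[OF assms(1)] assms(2) in \<open>simp add: bij_betw_def\<close>)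

lemma step_pair_op_time:
  assumes "S \<in> Cset d n" "a \<in> adm_pairs d n"
  shows "step_pair d n S (op_time d n S a) = a"
  unfolding op_time_def
  by (rule f_inv_into_f) (use bij_betw_step_pair[OF assms(1)] assms(2) in \<open>simp add: bij_betw_def\<close>)

lemma op_time_step_pair:
  "S \<in> Cset d n \<Longrightarrow> t \<in> {1..d * (n - d)} \<Longrightarrow> op_time d n S (step_pair d n S t) = t"
  unfolding op_time_def using bij_betw_step_pair by (auto simp: bij_betw_def inv_into_f_f)

lemma op_time_order:
  assumes S: "S \<in> Cset d n" and a: "a \<in> adm_pairs d n" and b: "b \<in> adm_pairs d n"
    and less: "adm_less a b"
  shows "op_time d n S a < op_time d n S b"
  using step_pair_order[OF S op_time_range[OF S a] op_time_range[OF S b]] less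
    step_pair_op_time[OF S] a b by simp

lemma sigma_eq_ext_right:
  assumes S: "S \<in> Cset d n" and t: "t \<in> {1..d * (n - d)}"
  shows "sigma d n S t = ext_right d n (step_pair d n S t)"
proof -
  let ?a = "step_pair d n S t"
  have a: "?a \<in> adm_pairs d n" by (rule step_pair_adm_pairs[OF S t])
  have "step_pair d n (C_right d n) u = ?a \<longleftrightarrow> u = ext_right d n ?a" if "u \<in> {1..d * (n - d)}" for u
    using step_pair_ext_chain[OF lin_ext_ext_right that] lin_ext_inv_into[OF lin_ext_ext_right that]
      a
      lin_ext_ext_right inv_into_f_f[of "ext_right d n" "adm_pairs d n" ?a]
    unfolding C_right_eq lin_ext_def bij_betw_def by auto
  then have "(THE u. u \<in> {1..d * (n - d)} \<and> step_pair d n (C_right d n) u = ?a) = ext_right d n ?a"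
    using lin_ext_range[OF lin_ext_ext_right a] by auto
  then show ?thesis using t by (simp add: sigma_def)
qed

lemma sigma_outside: "t \<notin> {1..d * (n - d)} \<Longrightarrow> sigma d n S t = t"
  unfolding sigma_def by (rule if_not_P)

lemma sigma_permutes:
  assumes S: "S \<in> Cset d n"
  shows "sigma d n S permutes {1..d * (n - d)}"
proof (rule bij_imp_permutes)
  have "bij_betw (ext_right d n) (adm_pairs d n) {1..d * (n - d)}"
    using lin_ext_ext_right by (simp add: lin_ext_def)
  then have "bij_betw (ext_right d n \<circ> step_pair d n S) {1..d * (n - d)} {1..d * (n - d)}"
    by (rule bij_betw_trans[OF bij_betw_step_pair[OF S]])
  then show "bij_betw (sigma d n S) {1..d * (n - d)} {1..d * (n - d)}"
    by (rule bij_betw_cong[THEN iffD1, rotated]) (simp add: sigma_eq_ext_right[OF S])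
qed (rule sigma_outside)

lemma inv_sigma_ext_right:
  assumes S: "S \<in> Cset d n" and a: "a \<in> adm_pairs d n"
  shows "inv (sigma d n S) (ext_right d n a) = op_time d n S a"
  using sigma_eq_ext_right[OF S op_time_range[OF S a]] step_pair_op_time[OF S a]
    permutes_inverses(2)[OF sigma_permutes[OF S]] by metis

lemma op_time_chain_left: "a \<in> adm_pairs d n \<Longrightarrow> op_time d n (chain_left d n) a = ext_left d n a"
  using op_time_step_pair[OF ext_chain_Cset[OF lin_ext_ext_left] lin_ext_range[OF lin_ext_ext_left]]
    step_pair_ext_chain[OF lin_ext_ext_left lin_ext_range[OF lin_ext_ext_left]] lin_ext_ext_left
  by (auto simp: lin_ext_def bij_betw_def inv_into_f_f)

lemma inv_set_sigma_iff:
  assumes S: "S \<in> Cset d n" and a: "a \<in> adm_pairs d n" and b: "b \<in> adm_pairs d n"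
    and less: "ext_right d n a < ext_right d n b"
  shows "(ext_right d n a, ext_right d n b) \<in> inv_set (d * (n - d)) (sigma d n S) \<longleftrightarrow>
    op_time d n S b < op_time d n S a"
  using less lin_ext_range[OF lin_ext_ext_right a] lin_ext_range[OF lin_ext_ext_right b]
  by (simp add: inv_set_def inv_sigma_ext_right[OF S a] inv_sigma_ext_right[OF S b])

lemma ext_right_surj:
  assumes "x \<in> {1..d * (n - d)}"
  obtains a where "a \<in> adm_pairs d n" "x = ext_right d n a"
  using lin_ext_inv_into[OF lin_ext_ext_right assms] by metis

text \<open>An inversion of \<open>\<sigma>\<^sub>C\<close> is a pair of operators that \<open>C\<close> and \<open>C\<^sub>r\<^sub>i\<^sub>g\<^sub>h\<^sub>t\<close> use in
  opposite orders. Such a pair is incomparable, hence also ordered oppositely by the row and the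
  column reading, i.e. by \<open>C\<^sub>r\<^sub>i\<^sub>g\<^sub>h\<^sub>t\<close> and \<open>C\<^sub>l\<^sub>e\<^sub>f\<^sub>t\<close>.\<close>

lemma inv_set_sigma_subset:
  assumes S: "S \<in> Cset d n"
  shows "inv_set (d * (n - d)) (sigma d n S) \<subseteq> inv_set (d * (n - d)) (sigma d n (C_left d n))"
proof
  fix z assume z: "z \<in> inv_set (d * (n - d)) (sigma d n S)"
  then obtain x y where "z = (x, y)" "x \<in> {1..d * (n - d)}" "y \<in> {1..d * (n - d)}"
    by (auto simp: inv_set_def)
  then obtain a b where ab: "a \<in> adm_pairs d n" "b \<in> adm_pairs d n"
    "z = (ext_right d n a, ext_right d n b)"
    by (metis ext_right_surj)
  then have less: "ext_right d n a < ext_right d n b" using z by (simp add: inv_set_def)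
  have "op_time d n S b < op_time d n S a" using inv_set_sigma_iff[OF S ab(1,2) less] z ab(3)
    by simp
  then have "\<not> adm_less a b" using op_time_order[OF S ab(1,2)] by (meson less_asym)
  then have "\<not> ext_left d n a < ext_left d n b"
    using adm_less_iff_ext_right_ext_left[OF ab(1,2)] less by simp
  moreover have "ext_left d n a \<noteq> ext_left d n b"
    using lin_ext_ext_left less inj_on_eq_iff[of "ext_left d n" "adm_pairs d n" a b] ab(1,2)
    by (auto simp: lin_ext_def bij_betw_def)
  ultimately have "ext_left d n b < ext_left d n a" by simp
  then show "z \<in> inv_set (d * (n - d)) (sigma d n (C_left d n))"
    using inv_set_sigma_iff[OF ext_chain_Cset[OF lin_ext_ext_left] ab(1,2) less] ab
      op_time_chain_left
    by (simp add: C_left_eq)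
qed

text \<open>Conversely, \<open>p\<close> prescribes the order \<open>p\<^sup>-\<^sup>1 \<circ> ext_right\<close> of the operators, and the
  inversion condition makes it a linear extension.\<close>

lemma sigma_surj:
  assumes p: "p permutes {1..d * (n - d)}"
    and sub: "inv_set (d * (n - d)) p \<subseteq> inv_set (d * (n - d)) (sigma d n (C_left d n))"
  obtains S where "S \<in> Cset d n" "sigma d n S = p"
proof -
  define lam where "lam = inv p \<circ> ext_right d n"
  have "lam a < lam b"
    if a: "a \<in> adm_pairs d n" and b: "b \<in> adm_pairs d n" and less: "adm_less a b" for a b
  proof (rule ccontr)
    have lr: "ext_right d n a < ext_right d n b" "ext_left d n a < ext_left d n b"
      using adm_less_iff_ext_right_ext_left[OF a b] less by simp_all
    assume "\<not> lam a < lam b"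
    moreover have "lam a \<noteq> lam b" using lr(1) permutes_inverses(1)[OF p] unfolding lam_def
      by (metis comp_apply less_irrefl)
    ultimately have "(ext_right d n a, ext_right d n b) \<in> inv_set (d * (n - d)) p"
      using lr(1) lin_ext_range[OF lin_ext_ext_right a] lin_ext_range[OF lin_ext_ext_right b]
      by (auto simp: inv_set_def lam_def)
    then have "op_time d n (chain_left d n) b < op_time d n (chain_left d n) a"
      using sub inv_set_sigma_iff[OF ext_chain_Cset[OF lin_ext_ext_left] a b lr(1)]
      by (auto simp: C_left_eq)
    then show False using lr(2) op_time_chain_left a b by simp
  qed
  moreover have "bij_betw lam (adm_pairs d n) {1..d * (n - d)}"
    using bij_betw_trans lin_ext_ext_right permutes_imp_bij[OF permutes_inv[OF p]]
    unfolding lam_def lin_ext_def by blast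
  ultimately have lam: "lin_ext d n lam" by (simp add: lin_ext_def)
  define S where "S = ext_chain d n lam"
  have S: "S \<in> Cset d n" unfolding S_def by (rule ext_chain_Cset[OF lam])
  have "sigma d n S t = p t" for t
  proof (cases "t \<in> {1..d * (n - d)}")
    case True
    let ?a = "inv_into (adm_pairs d n) lam t"
    have "inv p (ext_right d n ?a) = t" using lin_ext_inv_into[OF lam True] by (simp add: lam_def)
    then have "ext_right d n ?a = p t" using permutes_inverses(1)[OF p] by metis
    then show ?thesis using sigma_eq_ext_right[OF S True] step_pair_ext_chain[OF lam True]
      by (simp add: S_def)
  qed (simp add: sigma_outside permutes_not_in[OF p])
  then show ?thesis using that S by blast
qed

lemma sigma_inj: "inj_on (sigma d n) (Cset d n)"
proof (rule inj_onI)
  fix S1 S2 assume S: "S1 \<in> Cset d n" "S2 \<in> Cset d n" and eq: "sigma d n S1 = sigma d n S2"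
  have inj: "inj_on (ext_right d n) (adm_pairs d n)"
    using lin_ext_ext_right by (simp add: lin_ext_def bij_betw_def)
  have "step_pair d n S1 t = step_pair d n S2 t" if t: "t \<in> {1..d * (n - d)}" for t
    using sigma_eq_ext_right[OF S(1) t] sigma_eq_ext_right[OF S(2) t] eq
      inj_onD[OF inj _ step_pair_adm_pairs[OF S(1) t] step_pair_adm_pairs[OF S(2) t]] by simp
  then show "S1 = S2" using max_chain_eq_if_step_pair_eq[OF S] by blast
qed

lemma sigma_image:
  "sigma d n ` Cset d n = {\<sigma>. \<sigma> permutes {1..d * (n - d)} \<and> weak_le (d * (n - d)) id \<sigma> \<and>
     weak_le (d * (n - d)) \<sigma> (sigma d n (C_left d n))}"
proof -
  have max: "sigma d n (C_left d n) permutes {1..d * (n - d)}"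
    using sigma_permutes ext_chain_Cset[OF lin_ext_ext_left] C_left_eq by simp
  show ?thesis
  proof (intro equalityI subsetI)
    fix \<sigma> assume "\<sigma> \<in> sigma d n ` Cset d n"
    then obtain S where S: "S \<in> Cset d n" "\<sigma> = sigma d n S" by blast
    then show "\<sigma> \<in> {\<sigma>. \<sigma> permutes {1..d * (n - d)} \<and> weak_le (d * (n - d)) id \<sigma> \<and>
        weak_le (d * (n - d)) \<sigma> (sigma d n (C_left d n))}"
      using sigma_permutes[OF S(1)] weak_le_id weak_le_if_inv_set_subset[OF _ max]
        inv_set_sigma_subset[OF S(1)] by simp
  next
    fix \<sigma> assume "\<sigma> \<in> {\<sigma>. \<sigma> permutes {1..d * (n - d)} \<and> weak_le (d * (n - d)) id \<sigma> \<and>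
        weak_le (d * (n - d)) \<sigma> (sigma d n (C_left d n))}"
    then have "\<sigma> permutes {1..d * (n - d)}"
      "inv_set (d * (n - d)) \<sigma> \<subseteq> inv_set (d * (n - d)) (sigma d n (C_left d n))"
      using inv_set_subset_if_weak_le[OF max] by auto
    then show "\<sigma> \<in> sigma d n ` Cset d n" by (metis sigma_surj image_eqI)
  qed
qed

end

section \<open>Peaks\<close>

lemma bij_betw_agree_off_two:
  assumes f: "bij_betw f A B" and g: "bij_betw g A B" and tu: "t \<in> A" "u \<in> A"
    and agree: "\<And>x. x \<in> A \<Longrightarrow> x \<noteq> t \<Longrightarrow> x \<noteq> u \<Longrightarrow> g x = f x"
    and ne: "g t \<noteq> f t"
  shows "x \<in> A \<Longrightarrow> g x = f (Transposition.transpose t u x)"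
proof -
  have inj: "inj_on g A" using g by (simp add: bij_betw_def)
  have other: "v = t \<or> v = u" if "v \<in> A" "w \<in> {t, u}" "g w = f v" for v w
  proof (rule ccontr)
    assume "\<not> (v = t \<or> v = u)"
    then have "g v = g w" using agree that by simp
    then have "v = w" using inj_onD[OF inj] that(1,2) tu by blast
    then show False using that(2) \<open>\<not> (v = t \<or> v = u)\<close> by blast
  qed
  have surj: "f ` A = B" "g ` A = B" using f g by (simp_all add: bij_betw_def)
  obtain v where v: "v \<in> A" "g t = f v" using surj tu(1) by (metis imageE image_eqI)
  then have gt: "g t = f u" using other[of v t] ne by auto
  obtain w where w: "w \<in> A" "g u = f w" using surj tu(2) by (metis imageE image_eqI)
  have "t \<noteq> u" using gt ne by auto
  then have "w \<noteq> u" using w gt inj_onD[OF inj _ tu(2,1)] by auto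
  then have gu: "g u = f t" using other[of w u] w by auto
  show "x \<in> A \<Longrightarrow> g x = f (Transposition.transpose t u x)"
    using gt gu agree by (auto simp: transpose_def)
qed

context grassmann_poset
begin

lemma four_elem_other_mid:
  assumes S: "S \<in> Cset d n" and t: "1 \<le> t" "Suc t \<le> d * (n - d)" and four: "four_elem d n S t"
  shows "other_mid d n S t \<in> Irows d n" "other_mid d n S t \<noteq> chain_elem S t"
    "row_le (chain_elem S (t - 1)) (other_mid d n S t)"
    "row_le (other_mid d n S t) (chain_elem S (Suc t))"
    "row_len (other_mid d n S t) = t"
proof -
  let ?a = "chain_elem S (t - 1)" and ?b = "chain_elem S t" and ?c = "chain_elem S (Suc t)"
  let ?I = "bruhat_interval d n ?a ?c"
  have I: "?a \<in> Irows d n" "?b \<in> Irows d n" "?c \<in> Irows d n"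
    using chain_elem_Irows[OF S] t by auto
  have len: "row_len ?a = t - 1" "row_len ?b = t" "row_len ?c = Suc t"
    using chain_elem_mem(2)[OF S] t by auto
  have "row_le ?a ?b" "row_le ?b ?c" "row_le ?a ?c" using chain_elem_mono[OF S] t by auto
  then have sub: "{?a, ?b, ?c} \<subseteq> ?I" using I row_le_refl by (auto simp: bruhat_interval_def)
  have "card ?I = 4" using four by (simp add: four_elem_def)
  moreover have "?a \<noteq> ?b" "?b \<noteq> ?c" "?a \<noteq> ?c" using len t by (auto dest: arg_cong[of _ _ row_len])
  then have "card {?a, ?b, ?c} = 3" by simp
  ultimately have "card (?I - {?a, ?b, ?c}) = 1" using card_Diff_subset[OF _ sub] by simp
  then obtain y where y: "?I - {?a, ?b, ?c} = {y}" by (rule card_1_singletonE)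
  then have "other_mid d n S t = y" by (simp add: other_mid_def)
  moreover have "y \<in> Irows d n" "row_le ?a y" "row_le y ?c" "y \<noteq> ?a" "y \<noteq> ?b" "y \<noteq> ?c"
    using y by (auto simp: bruhat_interval_def)
  moreover have "row_len y = t"
    using row_len_strict_mono[OF I(1) \<open>y \<in> Irows d n\<close> \<open>row_le ?a y\<close>]
      row_len_strict_mono[OF \<open>y \<in> Irows d n\<close> I(3) \<open>row_le y ?c\<close>] \<open>y \<noteq> ?a\<close> \<open>y \<noteq> ?c\<close> len t
    by auto
  ultimately show "other_mid d n S t \<in> Irows d n" "other_mid d n S t \<noteq> ?b"
    "row_le ?a (other_mid d n S t)"
    "row_le (other_mid d n S t) ?c" "row_len (other_mid d n S t) = t"
    by simp_all
qed

context
  fixes S t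
  assumes S: "S \<in> Cset d n" and t: "1 \<le> t" "Suc t \<le> d * (n - d)" and four: "four_elem d n S t"
begin

lemma op_path_replace: "op_path d n ((chain_elem S)(t := other_mid d n S t))"
  unfolding op_path_def
proof (intro conjI allI impI)
  let ?x = "chain_elem S" and ?y = "other_mid d n S t"
  note y = four_elem_other_mid[OF S t four]
  have x: "op_path d n ?x" by (rule op_path_chain_elem[OF S])
  have len: "row_len (?x (t - 1)) = t - 1" "row_len (?x (Suc t)) = Suc t"
    using chain_elem_mem(2)[OF S] t by auto
  obtain s h where into: "root_op s h (?x (t - 1)) = Some ?y"
    using root_op_of_row_len_Suc[OF chain_elem_Irows[OF S] y(1) y(3)] len y(5) t by auto
  obtain s' h' where out: "root_op s' h' ?y = Some (?x (Suc t))"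
    using root_op_of_row_len_Suc[OF y(1) chain_elem_Irows[OF S] y(4)] len y(5) t by auto
  show "(?x(t := ?y)) 0 = row_min d" using x t by (simp add: op_path_def)
  show "(?x(t := ?y)) u \<in> Irows d n" if "u \<le> d * (n - d)" for u
    using that y(1) chain_elem_Irows[OF S] by simp
  show "\<exists>s h. root_op s h ((?x(t := ?y)) u) = Some ((?x(t := ?y)) (Suc u))"
    if u: "u < d * (n - d)" for u
  proof -
    consider "Suc u = t" | "u = t" | "Suc u \<noteq> t" "u \<noteq> t" by blast
    then show ?thesis
    proof cases
      case 1
      then have "(?x(t := ?y)) u = ?x (t - 1)" "(?x(t := ?y)) (Suc u) = ?y" by auto
      then show ?thesis using into by (simp only:) blast
    next
      case 2
      then show ?thesis using out by auto
    next
      case 3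
      then show ?thesis using x u by (simp add: op_path_def)
    qed
  qed
qed

lemma replace_chain_elem:
  defines "S' \<equiv> insert (other_mid d n S t) (S - {chain_elem S t})"
  shows "S' \<in> Cset d n"
    "u \<le> d * (n - d) \<Longrightarrow> chain_elem S' u = ((chain_elem S)(t := other_mid d n S t)) u"
proof -
  let ?x = "chain_elem S" and ?x' = "(chain_elem S)(t := other_mid d n S t)"
  have "?x' ` {0..d * (n - d)} = insert (?x' t) (?x ` ({0..d * (n - d)} - {t}))"
    using t by (auto simp: image_iff)
  also have "?x ` ({0..d * (n - d)} - {t}) = S - {?x t}"
  proof -
    have "t \<le> d * (n - d)" using t by auto
    then have "?x u \<noteq> ?x t" if "u \<le> d * (n - d)" "u \<noteq> t" for u
      using chain_elem_mem(2)[OF S] that by (metis arg_cong[of _ _ row_len])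
    then show ?thesis using max_chain_eq_image[OF S] t by auto
  qed
  finally have S': "S' = ?x' ` {0..d * (n - d)}" by (simp add: S'_def)
  show "S' \<in> Cset d n" unfolding S' by (rule op_path_image_Cset[OF op_path_replace])
  show "u \<le> d * (n - d) \<Longrightarrow> chain_elem S' u = ?x' u"
    unfolding S' by (rule chain_elem_op_path_image[OF op_path_replace])
qed

lemma step_pair_replace:
  assumes u: "u \<in> {1..d * (n - d)}"
  shows "step_pair d n (insert (other_mid d n S t) (S - {chain_elem S t})) u =
    step_pair d n S (adj_transp t u)"
proof -
  let ?S' = "insert (other_mid d n S t) (S - {chain_elem S t})"
  note S' = replace_chain_elem
  have tt: "t \<in> {1..d * (n - d)}" "Suc t \<in> {1..d * (n - d)}" using t by auto
  have "step_pair d n ?S' v = step_pair d n S v" if "v \<in> {1..d * (n - d)}" "v \<noteq> t" "v \<noteq> Suc t" for v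
  proof -
    have "chain_elem ?S' (v - 1) = chain_elem S (v - 1)" "chain_elem ?S' v = chain_elem S v"
      using S'(2) that by auto
    then show ?thesis by (simp add: step_pair_def)
  qed
  moreover have "step_pair d n ?S' t \<noteq> step_pair d n S t"
  proof
    assume eq: "step_pair d n ?S' t = step_pair d n S t"
    obtain s h where p: "step_pair d n S t = (s, h)" by (cases "step_pair d n S t")
    have "chain_elem ?S' (t - 1) = chain_elem S (t - 1)" "chain_elem ?S' t = other_mid d n S t"
      using S'(2) t by auto
    moreover have "root_op s h (chain_elem ?S' (t - 1)) = Some (chain_elem ?S' t)"
      using step_pair_eq_iff[OF S'(1) tt(1), THEN iffD1] eq p by simp
    ultimately have "root_op s h (chain_elem S (t - 1)) = Some (other_mid d n S t)" by simp
    moreover have "root_op s h (chain_elem S (t - 1)) = Some (chain_elem S t)"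
      using step_pair_eq_iff[OF S tt(1)] p by blast
    ultimately show False using four_elem_other_mid(2)[OF S t four] by simp
  qed
  ultimately show ?thesis
    using bij_betw_agree_off_two[OF bij_betw_step_pair[OF S] bij_betw_step_pair[OF S'(1)] tt] u
    by blast
qed

lemma sigma_replace:
  "sigma d n (insert (other_mid d n S t) (S - {chain_elem S t})) = sigma d n S \<circ> adj_transp t"
proof
  fix u
  show "sigma d n (insert (other_mid d n S t) (S - {chain_elem S t})) u =
      (sigma d n S \<circ> adj_transp t) u"
  proof (cases "u \<in> {1..d * (n - d)}")
    case True
    moreover have "adj_transp t u \<in> {1..d * (n - d)}" using True t by (auto simp: transpose_def)
    ultimately show ?thesis
      using sigma_eq_ext_right[OF replace_chain_elem(1) True] sigma_eq_ext_right[OF S]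
        step_pair_replace by simp
  next
    case False
    moreover have "adj_transp t u = u" using False t by (auto simp: transpose_def)
    ultimately show ?thesis by (simp add: sigma_outside)
  qed
qed

end

lemma sigma_E_op:
  assumes "S \<in> Cset d n" "1 \<le> t" "Suc t \<le> d * (n - d)" "E_op d n t S = Some S'"
  shows "sigma d n S' = sigma d n S \<circ> adj_transp t"
  using assms sigma_replace by (auto simp: E_op_def left_peak_def split: if_splits)

lemma sigma_F_op:
  assumes "S \<in> Cset d n" "1 \<le> t" "Suc t \<le> d * (n - d)" "F_op d n t S = Some S'"
  shows "sigma d n S' = sigma d n S \<circ> adj_transp t"
  using assms sigma_replace by (auto simp: F_op_def right_peak_def split: if_splits)

end

theorem theorem2p32:
  fixes d n r :: nat
  assumes "1 \<le> d" and "d < n" and "r = d * (n - d)"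
  shows "bij_betw (sigma d n) (Cset d n)
           {\<sigma>. \<sigma> permutes {1..r} \<and> weak_le r id \<sigma> \<and> weak_le r \<sigma> (sigma d n (C_left d n))}
         \<and> (\<forall>t C. 1 \<le> t \<and> t \<le> r - 1 \<and> C \<in> Cset d n \<longrightarrow>
              (\<forall>C'. E_op d n t C = Some C' \<longrightarrow>
                   sigma d n C' = sigma d n C \<circ> Transposition.transpose t (Suc t)) \<and>
              (\<forall>C'. F_op d n t C = Some C' \<longrightarrow>
                   sigma d n C' = sigma d n C \<circ> Transposition.transpose t (Suc t)))"
proof -
  interpret grassmann_poset d n by standard (use assms(2) in simp)
  have "bij_betw (sigma d n) (Cset d n)
      {\<sigma>. \<sigma> permutes {1..r} \<and> weak_le r id \<sigma> \<and> weak_le r \<sigma> (sigma d n (C_left d n))}"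
    using sigma_inj sigma_image assms(3) by (simp add: bij_betw_def)
  moreover have "Suc t \<le> d * (n - d)" if "1 \<le> t" "t \<le> r - 1" for t
    using that assms(3) by linarith
  ultimately show ?thesis using sigma_E_op sigma_F_op by blast
qed

end
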